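(* Let $v\in\mathbb{Z}^d$ be primitive and $p$ an odd prime. Then $O_{v,p}=\bigsqcup_{h\in M}O_{v,p,h}$ (disjoint union of subsets of $\mathcal{Y}_p$), where $O_{v,p,h}=(\Delta K\times L_v(\mathbb{Z}_p))\cdot((k_v,h),(a_vk_vg_v,g_v^{-1}hg_v))\,\mathbb{G}(\mathbb{Z}[1/p])$.
   Context: Setup: $\mathbb{G}_1=\mathrm{SO}_d$, $\mathbb{G}_2=\mathrm{ASL}_{d-1}=\{\begin{pmatrix}g&*\\0&1\end{pmatrix}:g\in\mathrm{SL}_{d-1}\}$, $\mathbb{G}=\mathbb{G}_1\times\mathbb{G}_2$. Elements of $\mathbb{G}(\mathbb{R}\times\mathbb{Q}_p)$ are written $((g_{1,\infty},g_{1,p}),(g_{2,\infty},g_{2,p}))$ with $g_{i,\infty}\in\mathbb{G}_i(\mathbb{R})$, $g_{i,p}\in\mathbb{G}_i(\mathbb{Q}_p)$; $\mathbb{G}(\mathbb{Z}[1/p])$ is embedded diagonally, $(\gamma_1,\gamma_2)\mapsto((\gamma_1,\gamma_1),(\gamma_2,\gamma_2))$, and $\mathcal{Y}_p=\mathbb{G}(\mathbb{R}\times\mathbb{Q}_p)/\mathbb{G}(\mathbb{Z}[1/p])$. For primitive $v$: $\Lambda_v=v^\perp\cap\mathbb{Z}^d$; $H_v\le\mathrm{SO}_d$ the stabilizer of $v$; $g_v\in\mathrm{SL}_d(\mathbb{Z})$ a fixed matrix whose first $d-1$ columns form a positively oriented $\mathbb{Z}$-basis of $\Lambda_v$ (so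 $g_v^{-1}H_vg_v\le\mathrm{ASL}_{d-1}$); $L_v=\{(h,g_v^{-1}hg_v):h\in H_v\}\le\mathbb{G}$; $k_v\in\mathrm{SO}_d(\mathbb{R})$ fixed with $k_vv=\|v\|e_d$; $a_v=\mathrm{diag}(\|v\|^{-1/(d-1)},\dots,\|v\|^{-1/(d-1)},\|v\|)$, so that $a_vk_vg_v\in\mathrm{ASL}_{d-1}(\mathbb{R})$. With $e$ the identity, $O_{v,p}=((k_v,e),(a_vk_vg_v,e))\cdot L_v(\mathbb{R}\times\mathbb{Q}_p)\,\mathbb{G}(\mathbb{Z}[1/p])\subseteq\mathcal{Y}_p$. $M$ is a (finite) set of representatives of the double cosets in $H_v(\mathbb{Q}_p)=\bigsqcup_{h\in M}H_v(\mathbb{Z}_p)\,h\,H_v(\mathbb{Z}[1/p])$. $K=H_{e_d}(\mathbb{R})\cong\mathrm{SO}_{d-1}(\mathbb{R})$ and $\Delta K\times L_v(\mathbb{Z}_p)=\{((k,h'),(k,g_v^{-1}h'g_v)):k\in K,h'\in H_v(\mathbb{Z}_p)\}$, acting on $\mathcal{Y}_p$ from the left. *)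

theory Defs
  imports "Jordan_Normal_Form.Determinant" "HOL-Computational_Algebra.Factorial_Ring"
begin

definition padic_val :: "nat \<Rightarrow> rat \<Rightarrow> int" where
  "padic_val p q = (case quotient_of q of (a, b) \<Rightarrow>
      int (multiplicity (int p) a) - int (multiplicity (int p) b))"

definition padic_abs :: "nat \<Rightarrow> rat \<Rightarrow> real" where
  "padic_abs p q = (if q = 0 then 0 else real p powr (- real_of_int (padic_val p q)))"

text \<open>Q_p is the completion of Q w.r.t. the p-adic absolute value: an element of Q_p
  is represented by a p-adic Cauchy sequence of rationals, two representatives being
  equal in Q_p iff their difference is a p-adic null sequence.  Ring operations
  (hence matrix products, determinants, ...) act pointwise on representatives.\<close>
definition padic_cauchy :: "nat \<Rightarrow> (nat \<Rightarrow> rat) \<Rightarrow> bool" where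
  "padic_cauchy p x = (\<forall>e>0. \<exists>N. \<forall>m\<ge>N. \<forall>n\<ge>N. padic_abs p (x m - x n) < e)"

definition padic_null :: "nat \<Rightarrow> (nat \<Rightarrow> rat) \<Rightarrow> bool" where
  "padic_null p x = (\<forall>e>0. \<exists>N. \<forall>n\<ge>N. padic_abs p (x n) < e)"

text \<open>An element of Z_p: its representative is eventually p-integral
  (equivalently the limit has p-adic absolute value at most 1).\<close>
definition padic_integral :: "nat \<Rightarrow> (nat \<Rightarrow> rat) \<Rightarrow> bool" where
  "padic_integral p x = (\<exists>N. \<forall>n\<ge>N. padic_abs p (x n) \<le> 1)"

definition qp_mat :: "nat \<Rightarrow> nat \<Rightarrow> (nat \<Rightarrow> rat mat) \<Rightarrow> bool" where
  "qp_mat p d X = ((\<forall>n. X n \<in> carrier_mat d d) \<and>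
      (\<forall>i<d. \<forall>j<d. padic_cauchy p (\<lambda>n. X n $$ (i, j))))"

definition qp_mat_eq :: "nat \<Rightarrow> nat \<Rightarrow> (nat \<Rightarrow> rat mat) \<Rightarrow> (nat \<Rightarrow> rat mat) \<Rightarrow> bool" where
  "qp_mat_eq p d X Y = (\<forall>i<d. \<forall>j<d. padic_null p (\<lambda>n. X n $$ (i, j) - Y n $$ (i, j)))"

definition zp_mat :: "nat \<Rightarrow> nat \<Rightarrow> (nat \<Rightarrow> rat mat) \<Rightarrow> bool" where
  "zp_mat p d X = (\<forall>i<d. \<forall>j<d. padic_integral p (\<lambda>n. X n $$ (i, j)))"

definition seq_mult :: "(nat \<Rightarrow> rat mat) \<Rightarrow> (nat \<Rightarrow> rat mat) \<Rightarrow> (nat \<Rightarrow> rat mat)" where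
  "seq_mult X Y = (\<lambda>n. X n * Y n)"

definition topleft :: "nat \<Rightarrow> 'a mat \<Rightarrow> 'a mat" where
  "topleft d g = mat (d - 1) (d - 1) (\<lambda>(i, j). g $$ (i, j))"

definition SO_set :: "nat \<Rightarrow> 'a :: comm_ring_1 mat set" where
  "SO_set d = {g \<in> carrier_mat d d. transpose_mat g * g = 1\<^sub>m d \<and> det g = 1}"

text \<open>ASL_{d-1} realised as d x d matrices ((g, *), (0, 1)) with g in SL_{d-1}.\<close>
definition ASL_set :: "nat \<Rightarrow> 'a :: comm_ring_1 mat set" where
  "ASL_set d = {g \<in> carrier_mat d d. (\<forall>j<d - 1. g $$ (d - 1, j) = 0) \<and>
      g $$ (d - 1, d - 1) = 1 \<and> det (topleft d g) = 1}"

definition SO_Qp :: "nat \<Rightarrow> nat \<Rightarrow> (nat \<Rightarrow> rat mat) set" where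
  "SO_Qp p d = {X. qp_mat p d X \<and>
      qp_mat_eq p d (\<lambda>n. transpose_mat (X n) * X n) (\<lambda>n. 1\<^sub>m d) \<and>
      padic_null p (\<lambda>n. det (X n) - 1)}"

definition ASL_Qp :: "nat \<Rightarrow> nat \<Rightarrow> (nat \<Rightarrow> rat mat) set" where
  "ASL_Qp p d = {X. qp_mat p d X \<and>
      (\<forall>j<d - 1. padic_null p (\<lambda>n. X n $$ (d - 1, j))) \<and>
      padic_null p (\<lambda>n. X n $$ (d - 1, d - 1) - 1) \<and>
      padic_null p (\<lambda>n. det (topleft d (X n)) - 1)}"

definition in_Z_inv_p :: "nat \<Rightarrow> rat \<Rightarrow> bool" where
  "in_Z_inv_p p q = (\<exists>a::int. \<exists>k::nat. q = of_int a / of_nat p ^ k)"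

definition Z_inv_p_mat :: "nat \<Rightarrow> nat \<Rightarrow> rat mat \<Rightarrow> bool" where
  "Z_inv_p_mat p d g = (\<forall>i<d. \<forall>j<d. in_Z_inv_p p (g $$ (i, j)))"

text \<open>Elements of G(R x Q_p) = G_1(R x Q_p) x G_2(R x Q_p), written
  ((g_{1,inf}, g_{1,p}), (g_{2,inf}, g_{2,p})).\<close>
type_synonym gelt = "(real mat \<times> (nat \<Rightarrow> rat mat)) \<times> (real mat \<times> (nat \<Rightarrow> rat mat))"

definition G_set :: "nat \<Rightarrow> nat \<Rightarrow> gelt set" where
  "G_set p d = {((a, b), (c, e)). a \<in> SO_set d \<and> b \<in> SO_Qp p d \<and>
      c \<in> ASL_set d \<and> e \<in> ASL_Qp p d}"

fun gmul :: "gelt \<Rightarrow> gelt \<Rightarrow> gelt" where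
  "gmul ((a, b), (c, e)) ((a', b'), (c', e')) = ((a * a', seq_mult b b'), (c * c', seq_mult e e'))"

fun geq :: "nat \<Rightarrow> nat \<Rightarrow> gelt \<Rightarrow> gelt \<Rightarrow> bool" where
  "geq p d ((a, b), (c, e)) ((a', b'), (c', e')) =
     (a = a' \<and> qp_mat_eq p d b b' \<and> c = c' \<and> qp_mat_eq p d e e')"

text \<open>G(Z[1/p]) embedded diagonally.\<close>
definition Gamma_set :: "nat \<Rightarrow> nat \<Rightarrow> gelt set" where
  "Gamma_set p d = {((map_mat of_rat g1, \<lambda>n. g1), (map_mat of_rat g2, \<lambda>n. g2)) | g1 g2.
      g1 \<in> SO_set d \<and> Z_inv_p_mat p d g1 \<and> g2 \<in> ASL_set d \<and> Z_inv_p_mat p d g2}"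

text \<open>The point x G(Z[1/p]) of Y_p, as the set of all its representatives.\<close>
definition Ycos :: "nat \<Rightarrow> nat \<Rightarrow> gelt \<Rightarrow> gelt set" where
  "Ycos p d x = {y \<in> G_set p d. \<exists>\<gamma>\<in>Gamma_set p d. geq p d y (gmul x \<gamma>)}"

definition Y_space :: "nat \<Rightarrow> nat \<Rightarrow> gelt set set" where
  "Y_space p d = Ycos p d ` G_set p d"

definition primitive_vec :: "nat \<Rightarrow> int vec \<Rightarrow> bool" where
  "primitive_vec d v = (v \<in> carrier_vec d \<and>
      (\<forall>k::int. (\<forall>i<d. k dvd v $ i) \<longrightarrow> is_unit k))"

definition vnorm :: "int vec \<Rightarrow> real" where
  "vnorm v = sqrt (real_of_int (v \<bullet> v))"

definition Lambda :: "nat \<Rightarrow> int vec \<Rightarrow> int vec set" where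
  "Lambda d v = {w \<in> carrier_vec d. w \<bullet> v = 0}"

definition inv_mat :: "nat \<Rightarrow> 'a :: comm_ring_1 mat \<Rightarrow> 'a mat" where
  "inv_mat d g = (THE h. h \<in> carrier_mat d d \<and> h * g = 1\<^sub>m d)"

definition valid_gv :: "nat \<Rightarrow> int vec \<Rightarrow> int mat \<Rightarrow> bool" where
  "valid_gv d v g = (g \<in> carrier_mat d d \<and> det g = 1 \<and>
      (\<forall>j<d - 1. col g j \<in> Lambda d v) \<and>
      (\<forall>w\<in>Lambda d v. \<exists>c::nat \<Rightarrow> int. w = finsum_vec TYPE(int) d (\<lambda>j. c j \<cdot>\<^sub>v col g j) {..<d - 1}) \<and>
      det (mat d d (\<lambda>(i, j). if j < d - 1 then g $$ (i, j) else v $ i)) > 0)"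

definition e_last :: "nat \<Rightarrow> 'a :: zero_neq_one vec" where
  "e_last d = unit_vec d (d - 1)"

definition valid_kv :: "nat \<Rightarrow> int vec \<Rightarrow> real mat \<Rightarrow> bool" where
  "valid_kv d v k = (k \<in> SO_set d \<and> k *\<^sub>v map_vec real_of_int v = vnorm v \<cdot>\<^sub>v e_last d)"

definition a_mat :: "nat \<Rightarrow> int vec \<Rightarrow> real mat" where
  "a_mat d v = mat d d (\<lambda>(i, j). if i \<noteq> j then 0 else if i = d - 1 then vnorm v
      else vnorm v powr (- 1 / real (d - 1)))"

definition H_R :: "nat \<Rightarrow> int vec \<Rightarrow> real mat set" where
  "H_R d v = {h \<in> SO_set d. h *\<^sub>v map_vec real_of_int v = map_vec real_of_int v}"

definition H_Qp :: "nat \<Rightarrow> nat \<Rightarrow> int vec \<Rightarrow> (nat \<Rightarrow> rat mat) set" where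
  "H_Qp p d v = {X \<in> SO_Qp p d. \<forall>i<d.
      padic_null p (\<lambda>n. (X n *\<^sub>v map_vec rat_of_int v) $ i - rat_of_int (v $ i))}"

definition H_Zp :: "nat \<Rightarrow> nat \<Rightarrow> int vec \<Rightarrow> (nat \<Rightarrow> rat mat) set" where
  "H_Zp p d v = {X \<in> H_Qp p d v. zp_mat p d X}"

definition H_Zinvp :: "nat \<Rightarrow> nat \<Rightarrow> int vec \<Rightarrow> rat mat set" where
  "H_Zinvp p d v = {g \<in> SO_set d. Z_inv_p_mat p d g \<and>
      g *\<^sub>v map_vec rat_of_int v = map_vec rat_of_int v}"

definition K_set :: "nat \<Rightarrow> real mat set" where
  "K_set d = {k \<in> SO_set d. k *\<^sub>v e_last d = e_last d}"

definition conj_R :: "nat \<Rightarrow> int mat \<Rightarrow> real mat \<Rightarrow> real mat" where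
  "conj_R d g h = inv_mat d (map_mat real_of_int g) * h * map_mat real_of_int g"

definition conj_Qp :: "nat \<Rightarrow> int mat \<Rightarrow> (nat \<Rightarrow> rat mat) \<Rightarrow> (nat \<Rightarrow> rat mat)" where
  "conj_Qp d g X = (\<lambda>n. inv_mat d (map_mat rat_of_int g) * X n * map_mat rat_of_int g)"

definition Lv_RQp :: "nat \<Rightarrow> nat \<Rightarrow> int vec \<Rightarrow> int mat \<Rightarrow> gelt set" where
  "Lv_RQp p d v g = {((hr, hp), (conj_R d g hr, conj_Qp d g hp)) | hr hp.
      hr \<in> H_R d v \<and> hp \<in> H_Qp p d v}"

definition DeltaK_LvZp :: "nat \<Rightarrow> nat \<Rightarrow> int vec \<Rightarrow> int mat \<Rightarrow> gelt set" where
  "DeltaK_LvZp p d v g = {((k, h'), (k, conj_Qp d g h')) | k h'.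
      k \<in> K_set d \<and> h' \<in> H_Zp p d v}"

definition O_v :: "nat \<Rightarrow> nat \<Rightarrow> int vec \<Rightarrow> int mat \<Rightarrow> real mat \<Rightarrow> gelt set set" where
  "O_v p d v g k = {Ycos p d (gmul ((k, \<lambda>n. 1\<^sub>m d),
        (a_mat d v * k * map_mat real_of_int g, \<lambda>n. 1\<^sub>m d)) l) | l. l \<in> Lv_RQp p d v g}"

definition O_vh :: "nat \<Rightarrow> nat \<Rightarrow> int vec \<Rightarrow> int mat \<Rightarrow> real mat \<Rightarrow> (nat \<Rightarrow> rat mat) \<Rightarrow> gelt set set" where
  "O_vh p d v g k h = {Ycos p d (gmul u ((k, h),
        (a_mat d v * k * map_mat real_of_int g, conj_Qp d g h))) | u. u \<in> DeltaK_LvZp p d v g}"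

definition double_coset_reps :: "nat \<Rightarrow> nat \<Rightarrow> int vec \<Rightarrow> (nat \<Rightarrow> rat mat) set \<Rightarrow> bool" where
  "double_coset_reps p d v M = (finite M \<and> M \<subseteq> H_Qp p d v \<and>
     (\<forall>g\<in>H_Qp p d v. \<exists>h\<in>M. \<exists>a\<in>H_Zp p d v. \<exists>\<gamma>\<in>H_Zinvp p d v.
         qp_mat_eq p d g (\<lambda>n. a n * h n * \<gamma>)) \<and>
     (\<forall>h1\<in>M. \<forall>h2\<in>M. (\<exists>a1\<in>H_Zp p d v. \<exists>a2\<in>H_Zp p d v. \<exists>\<gamma>1\<in>H_Zinvp p d v. \<exists>\<gamma>2\<in>H_Zinvp p d v.
         qp_mat_eq p d (\<lambda>n. a1 n * h1 n * \<gamma>1) (\<lambda>n. a2 n * h2 n * \<gamma>2)) \<longrightarrow> h1 = h2))"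

end

theory Submission
  imports Defs
begin

text \<open>
  Write \<delta>(k) = ((k, 1), (k, 1)) for k in K and \<xi>(X) = ((k_v, X), (a_v k_v g_v, g_v^-1 X g_v)) for
  X in H_v(Q_p). Since v^T g_v = e_d^T (primitivity of v and orientation of g_v), a_v k_v g_v lies
  in ASL_{d-1}(R), and since a_v commutes with K, the base point of O_{v,p} times (h, g_v^-1 h g_v)
  equals \<delta>(k_v h k_v^-1) \<xi>(X); hence O_{v,p} consists of the classes of \<delta>(k) \<xi>(X), and
  O_{v,p,h} of those of \<delta>(k) \<xi>(a h) with a in H_v(Z_p). For g in H_v(Z[1/p]) the same
  computation gives \<xi>(X) (g, g_v^-1 g g_v) = \<delta>(k_v g k_v^-1) \<xi>(X g), so writing X = a h g
  with h in M puts every point of O_{v,p} into O_{v,p,h}. Conversely, if the classes of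
  \<delta>(k_1) \<xi>(a_1 h_1) and \<delta>(k_2) \<xi>(a_2 h_2) agree, the SO_d-components show that the element of
  G(Z[1/p]) relating them is (g, *) with g fixing v, so a_1 h_1 = a_2 h_2 g and h_1 = h_2.
\<close>

lemma index_mult_mat_sum:
  assumes "A \<in> carrier_mat n n" "B \<in> carrier_mat n n" "i < n" "j < n"
  shows "(A * B) $$ (i, j) = (\<Sum>k<n. A $$ (i, k) * B $$ (k, j))"
  using assms by (auto simp: scalar_prod_def lessThan_atLeast0 intro!: sum.cong)

lemma index_mult_mat_vec_sum:
  assumes "A \<in> carrier_mat n n" "x \<in> carrier_vec n" "i < n"
  shows "(A *\<^sub>v x) $ i = (\<Sum>k<n. A $$ (i, k) * x $ k)"
  using assms by (auto simp: scalar_prod_def lessThan_atLeast0 intro!: sum.cong)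

lemma mult_carrier_square [simp]:
  "A \<in> carrier_mat n n \<Longrightarrow> B \<in> carrier_mat n n \<Longrightarrow> A * B \<in> carrier_mat n n"
  by auto

text \<open>Unlike assoc_mult_mat, usable by the simplifier once n is instantiated.\<close>
lemma mult_assoc_square:
  "(A :: 'a :: semiring_0 mat) \<in> carrier_mat n n \<Longrightarrow> B \<in> carrier_mat n n \<Longrightarrow> C \<in> carrier_mat n n
    \<Longrightarrow> A * B * C = A * (B * C)"
  by auto

lemma mult_cancel_square:
  assumes "(A :: 'a :: semiring_1 mat) \<in> carrier_mat n n" "B \<in> carrier_mat n n"
    and "C \<in> carrier_mat n n" "A * B = 1\<^sub>m n"
  shows "A * (B * C) = C"
proof -
  have "A * (B * C) = (A * B) * C" using assms(1-3) by (rule assoc_mult_mat[symmetric])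
  thus ?thesis using assms(4) left_mult_one_mat[OF assms(3)] by simp
qed

lemma sum_lessThan_split_last:
  "1 \<le> (d::nat) \<Longrightarrow> (\<Sum>k<d. f k) = (\<Sum>k<d - 1. f k) + (f (d - 1) :: 'a :: comm_monoid_add)"
  by (cases d) auto

lemma index_diag_mult_mat:
  assumes "A \<in> carrier_mat n n" "(B :: 'a :: comm_ring_1 mat) \<in> carrier_mat n n" "i < n" "j < n"
    and "\<And>i l. i < n \<Longrightarrow> l < n \<Longrightarrow> A $$ (i, l) = (if i = l then \<alpha> i else 0)"
  shows "(A * B) $$ (i, j) = \<alpha> i * B $$ (i, j)"
proof -
  have "(A * B) $$ (i, j) = (\<Sum>l<n. A $$ (i, l) * B $$ (l, j))"
    using assms(1-4) by (rule index_mult_mat_sum)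
  also have "\<dots> = (\<Sum>l<n. if l = i then \<alpha> i * B $$ (l, j) else 0)"
    using assms by (intro sum.cong) auto
  finally show ?thesis using assms by (simp add: sum.delta')
qed

lemma index_mult_diag_mat:
  assumes "(B :: 'a :: comm_ring_1 mat) \<in> carrier_mat n n" "A \<in> carrier_mat n n" "i < n" "j < n"
    and "\<And>i l. i < n \<Longrightarrow> l < n \<Longrightarrow> A $$ (i, l) = (if i = l then \<alpha> i else 0)"
  shows "(B * A) $$ (i, j) = B $$ (i, j) * \<alpha> j"
proof -
  have "(B * A) $$ (i, j) = (\<Sum>l<n. B $$ (i, l) * A $$ (l, j))"
    using assms(1-4) by (rule index_mult_mat_sum)
  also have "\<dots> = (\<Sum>l<n. if l = j then B $$ (i, l) * \<alpha> j else 0)"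
    using assms by (intro sum.cong) auto
  finally show ?thesis using assms by (simp add: sum.delta')
qed

lemma inv_mat_eqI:
  assumes "(G :: 'a :: comm_ring_1 mat) \<in> carrier_mat n n" "H \<in> carrier_mat n n"
    and "G * H = 1\<^sub>m n" "H * G = 1\<^sub>m n"
  shows "inv_mat n G = H"
  unfolding inv_mat_def
proof (rule the_equality)
  fix h assume h: "h \<in> carrier_mat n n \<and> h * G = 1\<^sub>m n"
  have "h = h * (G * H)" using assms(3) h right_mult_one_mat[of h n n] by simp
  also have "\<dots> = (h * G) * H" by (rule assoc_mult_mat[symmetric]) (use h assms in auto)
  finally show "h = H" using h assms(2) by simp
qed (use assms in auto)

lemma inv_mat_of_int:
  assumes g: "g \<in> carrier_mat n n" and det: "det g = 1"
  defines "G \<equiv> map_mat (of_int :: int \<Rightarrow> 'a :: comm_ring_1) g"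
  shows "inv_mat n G = map_mat of_int (adj_mat g)"
    and "G * inv_mat n G = 1\<^sub>m n" "inv_mat n G * G = 1\<^sub>m n" "inv_mat n G \<in> carrier_mat n n"
proof -
  have adj: "adj_mat g \<in> carrier_mat n n" "g * adj_mat g = 1\<^sub>m n" "adj_mat g * g = 1\<^sub>m n"
    using adj_mat[OF g] det by auto
  have "G * map_mat of_int (adj_mat g) = 1\<^sub>m n" "map_mat of_int (adj_mat g) * G = 1\<^sub>m n"
    unfolding G_def of_int_hom.mat_hom_mult[OF g adj(1), symmetric]
      of_int_hom.mat_hom_mult[OF adj(1) g, symmetric] adj(2,3) by (simp_all add: of_int_hom.mat_hom_one)
  moreover have "inv_mat n G = map_mat of_int (adj_mat g)"
    using calculation g adj(1) unfolding G_def by (intro inv_mat_eqI) auto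
  ultimately show "inv_mat n G = map_mat of_int (adj_mat g)"
    "G * inv_mat n G = 1\<^sub>m n" "inv_mat n G * G = 1\<^sub>m n" "inv_mat n G \<in> carrier_mat n n"
    using adj(1) by auto
qed

definition last_row_unit :: "nat \<Rightarrow> 'a :: zero_neq_one mat \<Rightarrow> bool" where
  "last_row_unit d M = (\<forall>j<d. M $$ (d - 1, j) = (if j = d - 1 then 1 else 0))"

lemma last_row_unit_iff:
  assumes "1 \<le> d"
  shows "last_row_unit d M \<longleftrightarrow> (\<forall>j<d - 1. M $$ (d - 1, j) = 0) \<and> M $$ (d - 1, d - 1) = 1"
proof
  assume "last_row_unit d M"
  thus "(\<forall>j<d - 1. M $$ (d - 1, j) = 0) \<and> M $$ (d - 1, d - 1) = 1"
    unfolding last_row_unit_def using assms by auto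
next
  assume R: "(\<forall>j<d - 1. M $$ (d - 1, j) = 0) \<and> M $$ (d - 1, d - 1) = 1"
  have "M $$ (d - 1, j) = (if j = d - 1 then 1 else 0)" if "j < d" for j
    using R that by (cases "j = d - 1") auto
  thus "last_row_unit d M" unfolding last_row_unit_def by blast
qed

lemma mat_delete_last_eq_topleft:
  "M \<in> carrier_mat d d \<Longrightarrow> mat_delete M (d - 1) (d - 1) = topleft d M"
  unfolding mat_delete_def topleft_def by (intro eq_matI) auto

lemma det_expand_last_row:
  assumes M: "(M :: 'a :: comm_ring_1 mat) \<in> carrier_mat d d" and d: "1 \<le> d"
  shows "det M = (\<Sum>j<d - 1. M $$ (d - 1, j) * cofactor M (d - 1) j)
    + M $$ (d - 1, d - 1) * det (topleft d M)"
proof -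
  have "det M = (\<Sum>j<d. M $$ (d - 1, j) * cofactor M (d - 1) j)"
    using laplace_expansion_row[OF M] d by simp
  also have "\<dots> = (\<Sum>j<d - 1. M $$ (d - 1, j) * cofactor M (d - 1) j)
      + M $$ (d - 1, d - 1) * cofactor M (d - 1) (d - 1)"
    by (rule sum_lessThan_split_last[OF d])
  also have "cofactor M (d - 1) (d - 1) = det (topleft d M)"
    unfolding cofactor_def mat_delete_last_eq_topleft[OF M] by (simp add: mult_2[symmetric])
  finally show ?thesis .
qed

lemma det_topleft_eq_det:
  assumes "(M :: 'a :: comm_ring_1 mat) \<in> carrier_mat d d" "1 \<le> d" "last_row_unit d M"
  shows "det (topleft d M) = det M"
  using det_expand_last_row[OF assms(1,2)] assms(3) unfolding last_row_unit_iff[OF assms(2)] by simp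

lemma ASL_set_iff:
  assumes "1 \<le> d"
  shows "(M :: 'a :: comm_ring_1 mat) \<in> ASL_set d \<longleftrightarrow> M \<in> carrier_mat d d \<and> last_row_unit d M \<and> det M = 1"
  unfolding ASL_set_def using det_topleft_eq_det[OF _ assms, of M] last_row_unit_iff[OF assms, of M] by auto

lemma index_last_row_unit_mult:
  assumes "(A :: 'a :: comm_ring_1 mat) \<in> carrier_mat d d" "B \<in> carrier_mat d d"
    and "last_row_unit d A" "j < d"
  shows "(A * B) $$ (d - 1, j) = B $$ (d - 1, j)"
proof -
  have "(A * B) $$ (d - 1, j) = (\<Sum>k<d. A $$ (d - 1, k) * B $$ (k, j))"
    using assms by (intro index_mult_mat_sum) auto
  also have "\<dots> = (\<Sum>k<d. if k = d - 1 then B $$ (k, j) else 0)"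
    using assms(3) unfolding last_row_unit_def by (intro sum.cong) auto
  finally show ?thesis using assms(4) by (simp add: sum.delta')
qed

lemma last_row_unit_mult:
  assumes "(A :: 'a :: comm_ring_1 mat) \<in> carrier_mat d d" "B \<in> carrier_mat d d"
    and "last_row_unit d A" "last_row_unit d B"
  shows "last_row_unit d (A * B)"
  using index_last_row_unit_mult[OF assms(1-3)] assms(4) unfolding last_row_unit_def by auto

lemma ASL_set_mult:
  assumes "1 \<le> d" "(A :: 'a :: comm_ring_1 mat) \<in> ASL_set d" "B \<in> ASL_set d"
  shows "A * B \<in> ASL_set d"
  using assms last_row_unit_mult[of A d B] det_mult[of A d B] unfolding ASL_set_iff[OF assms(1)] by auto

lemma SO_set_carrier: "A \<in> SO_set d \<Longrightarrow> A \<in> carrier_mat d d"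
  unfolding SO_set_def by auto

lemma SO_set_orthogonal: "A \<in> SO_set d \<Longrightarrow> transpose_mat A * A = 1\<^sub>m d"
  unfolding SO_set_def by auto

lemma SO_set_mult:
  assumes "(A :: 'a :: comm_ring_1 mat) \<in> SO_set d" "B \<in> SO_set d"
  shows "A * B \<in> SO_set d"
proof -
  have A: "A \<in> carrier_mat d d" and B: "B \<in> carrier_mat d d"
    using assms by (auto simp: SO_set_carrier)
  have "transpose_mat (A * B) * (A * B) = transpose_mat B * (transpose_mat A * (A * B))"
    using A B by (simp add: transpose_mult[OF A B] mult_assoc_square)
  also have "transpose_mat A * (A * B) = B"
    using A B SO_set_orthogonal[OF assms(1)] by (intro mult_cancel_square) auto
  finally show ?thesis using assms A B det_mult[OF A B] unfolding SO_set_def by auto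
qed

lemma SO_set_right_inverse: "(A :: 'a :: field mat) \<in> SO_set d \<Longrightarrow> A * transpose_mat A = 1\<^sub>m d"
  using mat_mult_left_right_inverse[of "transpose_mat A" d A] unfolding SO_set_def by auto

lemma SO_set_transpose: "(A :: 'a :: field mat) \<in> SO_set d \<Longrightarrow> transpose_mat A \<in> SO_set d"
  using SO_set_right_inverse[of A d] det_transpose[of A d] unfolding SO_set_def by auto

lemma SO_set_one: "1\<^sub>m d \<in> SO_set d"
  unfolding SO_set_def by auto

lemma SO_set_map_of_rat:
  assumes "g \<in> SO_set d"
  shows "map_mat (of_rat :: rat \<Rightarrow> real) g \<in> SO_set d"
proof -
  have g: "g \<in> carrier_mat d d" using assms by (rule SO_set_carrier)
  have "transpose_mat (map_mat (of_rat :: rat \<Rightarrow> real) g) * map_mat of_rat g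
      = map_mat of_rat (transpose_mat g * g)"
    unfolding map_mat_transpose using g by (simp add: of_rat_hom.mat_hom_mult)
  thus ?thesis using assms g of_rat_hom.hom_det[of g] unfolding SO_set_def by auto
qed

lemma SO_set_fix_transpose:
  assumes "(A :: 'a :: comm_ring_1 mat) \<in> SO_set d" "x \<in> carrier_vec d" "A *\<^sub>v x = x"
  shows "transpose_mat A *\<^sub>v x = x"
proof -
  have A: "A \<in> carrier_mat d d" using assms(1) by (rule SO_set_carrier)
  have "transpose_mat A *\<^sub>v x = transpose_mat A *\<^sub>v (A *\<^sub>v x)" using assms(3) by simp
  also have "\<dots> = (transpose_mat A * A) *\<^sub>v x" using A assms(2) by simp
  finally show ?thesis using assms(2) SO_set_orthogonal[OF assms(1)] by simp
qed

lemma e_last_carrier [simp]: "e_last d \<in> carrier_vec d"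
  unfolding e_last_def by simp

lemma index_e_last: "i < d \<Longrightarrow> e_last d $ i = (if i = d - 1 then 1 else 0)"
  unfolding e_last_def by simp

lemma K_set_SO_set: "k \<in> K_set d \<Longrightarrow> k \<in> SO_set d"
  unfolding K_set_def by auto

lemma K_set_carrier: "k \<in> K_set d \<Longrightarrow> k \<in> carrier_mat d d"
  by (intro SO_set_carrier K_set_SO_set)

lemma K_set_last_col:
  assumes k: "k \<in> K_set d" and i: "i < d"
  shows "k $$ (i, d - 1) = (if i = d - 1 then 1 else 0)"
proof -
  have "k $$ (i, d - 1) = (\<Sum>l<d. k $$ (i, l) * e_last d $ l)"
    using i by (simp add: index_e_last sum.delta' if_distrib cong: if_cong)
  also have "\<dots> = (k *\<^sub>v e_last d) $ i"
    using K_set_carrier[OF k] i by (intro index_mult_mat_vec_sum[symmetric]) auto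
  also have "\<dots> = e_last d $ i" using k unfolding K_set_def by simp
  finally show ?thesis using i by (simp add: index_e_last)
qed

lemma K_set_last_row:
  assumes k: "k \<in> K_set d"
  shows "last_row_unit d k"
  unfolding last_row_unit_def
proof (intro allI impI)
  fix j assume j: "j < d"
  have kc: "k \<in> carrier_mat d d" using k by (rule K_set_carrier)
  have "transpose_mat k *\<^sub>v e_last d = e_last d"
    using SO_set_fix_transpose[OF K_set_SO_set[OF k]] k unfolding K_set_def by simp
  hence "e_last d $ j = (\<Sum>l<d. transpose_mat k $$ (j, l) * e_last d $ l)"
    using index_mult_mat_vec_sum[of "transpose_mat k" d "e_last d" j] kc j by simp
  also have "\<dots> = k $$ (d - 1, j)"
    using kc j by (simp add: index_e_last sum.delta' if_distrib cong: if_cong)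
  finally show "k $$ (d - 1, j) = (if j = d - 1 then 1 else 0)" using j by (simp add: index_e_last)
qed

lemma K_set_ASL_set: "1 \<le> d \<Longrightarrow> k \<in> K_set d \<Longrightarrow> k \<in> ASL_set d"
  using K_set_last_row K_set_carrier unfolding ASL_set_iff K_set_def SO_set_def by blast

lemma K_set_mult:
  assumes "k \<in> K_set d" "k' \<in> K_set d"
  shows "k * k' \<in> K_set d"
proof -
  have "(k * k') *\<^sub>v e_last d = k *\<^sub>v (k' *\<^sub>v e_last d)"
    using K_set_carrier[OF assms(1)] K_set_carrier[OF assms(2)] by simp
  thus ?thesis using assms SO_set_mult unfolding K_set_def by auto
qed

lemma K_set_transpose:
  "k \<in> K_set d \<Longrightarrow> transpose_mat k \<in> K_set d"
  unfolding K_set_def using SO_set_transpose SO_set_fix_transpose[of k d "e_last d"] by auto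

lemma a_mat_carrier [simp]: "a_mat d v \<in> carrier_mat d d"
  and a_mat_dim [simp]: "dim_row (a_mat d v) = d" "dim_col (a_mat d v) = d"
  unfolding a_mat_def by simp_all

text \<open>The diagonal matrix a_v is scalar on the first d-1 coordinates, and K preserves that
  block decomposition.\<close>
lemma a_mat_comm_K:
  assumes k: "k \<in> K_set d"
  shows "a_mat d v * k = k * a_mat d v"
proof (rule eq_matI)
  define \<alpha> where "\<alpha> i = (if i = d - 1 then vnorm v else vnorm v powr (- 1 / real (d - 1)))" for i
  have a: "a_mat d v $$ (i, l) = (if i = l then \<alpha> i else 0)" if "i < d" "l < d" for i l
    using that unfolding a_mat_def \<alpha>_def by auto
  have kc: "k \<in> carrier_mat d d" using k by (rule K_set_carrier)
  fix i j assume "i < dim_row (k * a_mat d v)" "j < dim_col (k * a_mat d v)"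
  hence i: "i < d" and j: "j < d" using kc by auto
  have "k $$ (i, j) = 0" if "(i = d - 1) \<noteq> (j = d - 1)"
    using that K_set_last_row[OF k] K_set_last_col[OF k i] j unfolding last_row_unit_def by auto
  moreover have "\<alpha> i = \<alpha> j" if "(i = d - 1) = (j = d - 1)"
    using that unfolding \<alpha>_def by auto
  ultimately show "(a_mat d v * k) $$ (i, j) = (k * a_mat d v) $$ (i, j)"
    using index_diag_mult_mat[OF a_mat_carrier kc i j a] index_mult_diag_mat[OF kc a_mat_carrier i j a]
    by (cases "(i = d - 1) = (j = d - 1)") auto
qed (use K_set_carrier[OF k] in auto)

lemma det_a_mat:
  assumes d: "2 \<le> d" and v: "0 < vnorm v"
  shows "det (a_mat d v) = 1"
proof -
  have "upper_triangular (a_mat d v)" unfolding a_mat_def upper_triangular_def by auto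
  hence "det (a_mat d v) = (\<Prod>i<d. a_mat d v $$ (i, i))"
    using det_upper_triangular[of "a_mat d v" d] prod_list_diag_prod[of "a_mat d v"]
    by (simp add: lessThan_atLeast0)
  also have "\<dots> = (\<Prod>i<d - 1. a_mat d v $$ (i, i)) * a_mat d v $$ (d - 1, d - 1)"
    using d by (cases d) auto
  also have "\<dots> = (vnorm v powr (- 1 / real (d - 1))) ^ (d - 1) * vnorm v"
    using d unfolding a_mat_def by simp
  also have "(vnorm v powr (- 1 / real (d - 1))) ^ (d - 1) = vnorm v powr (- 1)"
    using d v by (simp add: powr_realpow[symmetric] powr_powr)
  finally show ?thesis using v by (simp add: powr_neg_one)
qed

lemma in_Z_inv_p_add:
  assumes "in_Z_inv_p p x" "in_Z_inv_p p y"
  shows "in_Z_inv_p p (x + y)"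
proof -
  obtain a k b l where x: "x = of_int a / of_nat p ^ k" and y: "y = of_int b / of_nat p ^ l"
    using assms unfolding in_Z_inv_p_def by auto
  show ?thesis
  proof (cases "p = 0")
    case True
    hence "x + y = of_int ((if k = 0 then a else 0) + (if l = 0 then b else 0)) / of_nat p ^ 0"
      using x y by (cases k; cases l) auto
    thus ?thesis unfolding in_Z_inv_p_def by blast
  next
    case False
    hence "x + y = of_int (a * int p ^ l + b * int p ^ k) / of_nat p ^ (k + l)"
      using x y by (simp add: add_frac_eq power_add)
    thus ?thesis unfolding in_Z_inv_p_def by blast
  qed
qed

lemma in_Z_inv_p_mult:
  assumes "in_Z_inv_p p x" "in_Z_inv_p p y"
  shows "in_Z_inv_p p (x * y)"
proof -
  obtain a k b l where "x = of_int a / of_nat p ^ k" "y = of_int b / of_nat p ^ l"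
    using assms unfolding in_Z_inv_p_def by auto
  hence "x * y = of_int (a * b) / of_nat p ^ (k + l)" by (simp add: power_add)
  thus ?thesis unfolding in_Z_inv_p_def by blast
qed

lemma in_Z_inv_p_of_int: "in_Z_inv_p p (of_int a)"
  unfolding in_Z_inv_p_def by (intro exI[of _ a] exI[of _ 0]) simp

lemma in_Z_inv_p_sum:
  "finite S \<Longrightarrow> (\<And>k. k \<in> S \<Longrightarrow> in_Z_inv_p p (f k)) \<Longrightarrow> in_Z_inv_p p (\<Sum>k\<in>S. f k)"
  by (induction S rule: finite_induct) (auto intro: in_Z_inv_p_add in_Z_inv_p_of_int[of _ 0, simplified])

lemma Z_inv_p_mat_mult:
  assumes "A \<in> carrier_mat d d" "B \<in> carrier_mat d d" "Z_inv_p_mat p d A" "Z_inv_p_mat p d B"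
  shows "Z_inv_p_mat p d (A * B)"
  unfolding Z_inv_p_mat_def
proof (intro allI impI)
  fix i j assume ij: "i < d" "j < d"
  have "in_Z_inv_p p (\<Sum>k<d. A $$ (i, k) * B $$ (k, j))"
    using assms(3,4) ij unfolding Z_inv_p_mat_def by (intro in_Z_inv_p_sum in_Z_inv_p_mult) auto
  thus "in_Z_inv_p p ((A * B) $$ (i, j))" using index_mult_mat_sum[OF assms(1,2) ij] by simp
qed

lemma Z_inv_p_mat_of_int: "A \<in> carrier_mat d d \<Longrightarrow> Z_inv_p_mat p d (map_mat rat_of_int A)"
  unfolding Z_inv_p_mat_def by (auto intro: in_Z_inv_p_of_int)

lemma Z_inv_p_mat_one: "Z_inv_p_mat p d (1\<^sub>m d)"
  using Z_inv_p_mat_of_int[of "1\<^sub>m d" d p] by (simp add: of_int_hom.mat_hom_one)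

lemma Z_inv_p_mat_transpose:
  "A \<in> carrier_mat d d \<Longrightarrow> Z_inv_p_mat p d A \<Longrightarrow> Z_inv_p_mat p d (transpose_mat A)"
  unfolding Z_inv_p_mat_def by simp

lemma map_of_rat_of_int: "map_mat (of_rat :: rat \<Rightarrow> real) (map_mat rat_of_int A) = map_mat real_of_int A"
  by (intro eq_matI) auto

lemma map_of_rat_fix_iff:
  assumes "g \<in> carrier_mat d d" "v \<in> carrier_vec d"
  shows "map_mat (of_rat :: rat \<Rightarrow> real) g *\<^sub>v map_vec real_of_int v = map_vec real_of_int v
    \<longleftrightarrow> g *\<^sub>v map_vec rat_of_int v = map_vec rat_of_int v"
proof -
  have r: "map_vec (of_rat :: rat \<Rightarrow> real) (map_vec rat_of_int v) = map_vec real_of_int v"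
    by (intro eq_vecI) auto
  have vq: "map_vec rat_of_int v \<in> carrier_vec d" using assms(2) by simp
  have eq: "map_vec (of_rat :: rat \<Rightarrow> real) (g *\<^sub>v map_vec rat_of_int v)
      = map_mat of_rat g *\<^sub>v map_vec real_of_int v"
    unfolding r[symmetric] by (rule of_rat_hom.mult_mat_vec_hom[OF assms(1) vq])
  show ?thesis
  proof
    assume "map_mat of_rat g *\<^sub>v map_vec real_of_int v = map_vec real_of_int v"
    hence "map_vec (of_rat :: rat \<Rightarrow> real) (g *\<^sub>v map_vec rat_of_int v)
        = map_vec of_rat (map_vec rat_of_int v)"
      unfolding eq r .
    thus "g *\<^sub>v map_vec rat_of_int v = map_vec rat_of_int v" by (rule of_rat_hom.vec_hom_inj)
  qed (use eq r in simp)
qed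

definition mat_seq :: "nat \<Rightarrow> (nat \<Rightarrow> 'a mat) \<Rightarrow> bool" where
  "mat_seq d X = (\<forall>n. X n \<in> carrier_mat d d)"

lemma mat_seqD: "mat_seq d X \<Longrightarrow> X n \<in> carrier_mat d d"
  unfolding mat_seq_def by auto

lemma mat_seq_dim [simp]: "mat_seq d X \<Longrightarrow> dim_row (X n) = d" "mat_seq d X \<Longrightarrow> dim_col (X n) = d"
  unfolding mat_seq_def by auto

lemma mat_seq_mult: "mat_seq d X \<Longrightarrow> mat_seq d Y \<Longrightarrow> mat_seq d (\<lambda>n. X n * Y n)"
  unfolding mat_seq_def by simp

lemma mat_seq_seq_mult: "mat_seq d X \<Longrightarrow> mat_seq d Y \<Longrightarrow> mat_seq d (seq_mult X Y)"
  unfolding mat_seq_def seq_mult_def by simp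

lemma mat_seq_const: "C \<in> carrier_mat d d \<Longrightarrow> mat_seq d (\<lambda>n. C)"
  unfolding mat_seq_def by auto

lemma mat_seq_transpose: "mat_seq d X \<Longrightarrow> mat_seq d (\<lambda>n. transpose_mat (X n))"
  unfolding mat_seq_def by auto

lemma seq_mult_one_left: "mat_seq d X \<Longrightarrow> seq_mult (\<lambda>n. 1\<^sub>m d) X = X"
  unfolding seq_mult_def by (auto intro!: ext left_mult_one_mat mat_seqD)

lemma seq_mult_one_right: "mat_seq d X \<Longrightarrow> seq_mult X (\<lambda>n. 1\<^sub>m d) = X"
  unfolding seq_mult_def by (auto intro!: ext right_mult_one_mat mat_seqD)

lemma seq_mult_assoc:
  "mat_seq d X \<Longrightarrow> mat_seq d Y \<Longrightarrow> mat_seq d Z \<Longrightarrow>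
    seq_mult (seq_mult X Y) Z = seq_mult X (seq_mult Y Z)"
  unfolding seq_mult_def by (auto intro!: ext assoc_mult_mat mat_seqD)

definition gcarrier :: "nat \<Rightarrow> gelt \<Rightarrow> bool" where
  "gcarrier d x = (case x of ((a, b), (c, e)) \<Rightarrow>
     a \<in> carrier_mat d d \<and> mat_seq d b \<and> c \<in> carrier_mat d d \<and> mat_seq d e)"

definition gone :: "nat \<Rightarrow> gelt" where
  "gone d = ((1\<^sub>m d, \<lambda>n. 1\<^sub>m d), (1\<^sub>m d, \<lambda>n. 1\<^sub>m d))"

lemma G_set_gcarrier: "x \<in> G_set p d \<Longrightarrow> gcarrier d x"
  unfolding G_set_def gcarrier_def SO_set_def ASL_set_def SO_Qp_def ASL_Qp_def qp_mat_def mat_seq_def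
  by auto

lemma Gamma_set_gcarrier: "x \<in> Gamma_set p d \<Longrightarrow> gcarrier d x"
  unfolding Gamma_set_def gcarrier_def SO_set_def ASL_set_def mat_seq_def by auto

lemma gmul_gcarrier: "gcarrier d x \<Longrightarrow> gcarrier d y \<Longrightarrow> gcarrier d (gmul x y)"
  by (cases x; cases y) (auto simp: gcarrier_def mat_seq_def seq_mult_def)

lemma gmul_assoc:
  assumes "gcarrier d x" "gcarrier d y" "gcarrier d z"
  shows "gmul (gmul x y) z = gmul x (gmul y z)"
proof -
  obtain a b c e a' b' c' e' a'' b'' c'' e'' where
    xyz: "x = ((a, b), (c, e))" "y = ((a', b'), (c', e'))" "z = ((a'', b''), (c'', e''))"
    by (cases x; cases y; cases z) auto
  thus ?thesis using assms
    by (auto simp: gcarrier_def seq_mult_assoc mult_assoc_square)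
qed

lemma gmul_gone:
  assumes "gcarrier d x"
  shows "gmul x (gone d) = x"
proof -
  obtain a b c e where "x = ((a, b), (c, e))" by (cases x) auto
  thus ?thesis using assms by (auto simp: gcarrier_def gone_def seq_mult_one_right)
qed

lemma Gamma_setI:
  "g1 \<in> SO_set d \<Longrightarrow> Z_inv_p_mat p d g1 \<Longrightarrow> g2 \<in> ASL_set d \<Longrightarrow> Z_inv_p_mat p d g2 \<Longrightarrow>
    ((map_mat of_rat g1, \<lambda>n. g1), (map_mat of_rat g2, \<lambda>n. g2)) \<in> Gamma_set p d"
  unfolding Gamma_set_def by blast

lemma gone_Gamma_set:
  assumes "1 \<le> d"
  shows "gone d \<in> Gamma_set p d"
proof -
  have "(1\<^sub>m d :: rat mat) \<in> ASL_set d" unfolding ASL_set_iff[OF assms] last_row_unit_def by auto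
  from Gamma_setI[OF SO_set_one Z_inv_p_mat_one this Z_inv_p_mat_one]
  show ?thesis unfolding gone_def of_rat_hom.mat_hom_one .
qed

lemma Gamma_set_mult:
  assumes d: "1 \<le> d" and "x \<in> Gamma_set p d" "y \<in> Gamma_set p d"
  shows "gmul x y \<in> Gamma_set p d"
proof -
  obtain g1 g2 h1 h2 where x: "x = ((map_mat of_rat g1, \<lambda>n. g1), (map_mat of_rat g2, \<lambda>n. g2))"
    and y: "y = ((map_mat of_rat h1, \<lambda>n. h1), (map_mat of_rat h2, \<lambda>n. h2))"
    and g: "g1 \<in> SO_set d" "Z_inv_p_mat p d g1" "g2 \<in> ASL_set d" "Z_inv_p_mat p d g2"
    and h: "h1 \<in> SO_set d" "Z_inv_p_mat p d h1" "h2 \<in> ASL_set d" "Z_inv_p_mat p d h2"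
    using assms(2,3) unfolding Gamma_set_def by auto
  have c: "g1 \<in> carrier_mat d d" "g2 \<in> carrier_mat d d" "h1 \<in> carrier_mat d d" "h2 \<in> carrier_mat d d"
    using g h unfolding SO_set_def ASL_set_def by auto
  have "gmul x y = ((map_mat of_rat (g1 * h1), \<lambda>n. g1 * h1), (map_mat of_rat (g2 * h2), \<lambda>n. g2 * h2))"
    unfolding x y using c by (simp add: seq_mult_def of_rat_hom.mat_hom_mult)
  also have "\<dots> \<in> Gamma_set p d"
    using SO_set_mult[OF g(1) h(1)] ASL_set_mult[OF d g(3) h(3)] c g h
    by (intro Gamma_setI Z_inv_p_mat_mult)
  finally show ?thesis .
qed

text \<open>All columns equal v: turns the condition X v = v into a matrix equation, so that the
  congruence rules for p-adic equality apply.\<close>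
definition v_cols :: "nat \<Rightarrow> int vec \<Rightarrow> rat mat" where
  "v_cols d v = mat d d (\<lambda>(i, j). rat_of_int (v $ i))"

lemma v_cols_carrier [simp]: "v_cols d v \<in> carrier_mat d d"
  unfolding v_cols_def by simp

lemma H_Zinvp_transpose:
  assumes "g \<in> H_Zinvp p d v"
  shows "transpose_mat g \<in> H_Zinvp p d v"
proof -
  have g: "g \<in> SO_set d" "Z_inv_p_mat p d g" "g *\<^sub>v map_vec rat_of_int v = map_vec rat_of_int v"
    using assms unfolding H_Zinvp_def by auto
  have "dim_vec (map_vec rat_of_int v) = d"
    using arg_cong[OF g(3), of dim_vec] SO_set_carrier[OF g(1)] by simp
  hence "transpose_mat g *\<^sub>v map_vec rat_of_int v = map_vec rat_of_int v"
    using SO_set_fix_transpose[OF g(1) _ g(3)] carrier_vecI by blast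
  moreover have "transpose_mat g \<in> SO_set d" by (rule SO_set_transpose[OF g(1)])
  moreover have "Z_inv_p_mat p d (transpose_mat g)"
    by (rule Z_inv_p_mat_transpose[OF SO_set_carrier[OF g(1)] g(2)])
  ultimately show ?thesis unfolding H_Zinvp_def by simp
qed

lemma H_Zinvp_one:
  assumes "v \<in> carrier_vec d"
  shows "1\<^sub>m d \<in> H_Zinvp p d v"
proof -
  have "1\<^sub>m d *\<^sub>v map_vec rat_of_int v = map_vec rat_of_int v" using assms by simp
  thus ?thesis unfolding H_Zinvp_def using SO_set_one Z_inv_p_mat_one by simp
qed

section \<open>p-adic limits of rational sequences\<close>

locale padic_prime =
  fixes p :: nat
  assumes prime_p: "prime p"
begin

lemma prime_elem_int_p: "prime_elem (int p)"
  using prime_p by simp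

lemma rat_nonzero_fraction:
  assumes "(q::rat) \<noteq> 0"
  obtains a b where "a \<noteq> 0" "b \<noteq> 0" "q = of_int a / of_int b"
proof -
  obtain a b where qo: "quotient_of q = (a, b)" by (cases "quotient_of q") auto
  have "b \<noteq> 0" "q = of_int a / of_int b" using quotient_of_div[OF qo] quotient_of_denom_pos[OF qo] by auto
  moreover have "a \<noteq> 0" using assms \<open>q = of_int a / of_int b\<close> by auto
  ultimately show ?thesis using that by blast
qed

lemma padic_val_fraction:
  assumes "a \<noteq> 0" "b \<noteq> 0" "q = of_int a / of_int b"
  shows "padic_val p q = int (multiplicity (int p) a) - int (multiplicity (int p) b)"
proof -
  obtain a' b' where qo: "quotient_of q = (a', b')" by (cases "quotient_of q") auto
  have b': "b' > 0" using quotient_of_denom_pos[OF qo] .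
  have "of_int a' / of_int b' = (of_int a / of_int b :: rat)"
    using assms(3) quotient_of_div[OF qo] by simp
  hence "of_int (a' * b) = (of_int (a * b') :: rat)" using assms(2) b' by (simp add: field_simps)
  hence eq: "a' * b = a * b'" by (simp only: of_int_eq_iff)
  have "a' \<noteq> 0" using eq assms b' by auto
  moreover have "multiplicity (int p) (a' * b) = multiplicity (int p) (a * b')" using eq by simp
  ultimately have "multiplicity (int p) a' + multiplicity (int p) b
      = multiplicity (int p) a + multiplicity (int p) b'"
    using prime_elem_multiplicity_mult_distrib[OF prime_elem_int_p] assms(1,2) b' by simp
  thus ?thesis unfolding padic_val_def qo by simp
qed

lemma padic_val_mult:
  assumes "q \<noteq> 0" "r \<noteq> 0"
  shows "padic_val p (q * r) = padic_val p q + padic_val p r"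
proof -
  obtain a b where ab: "a \<noteq> 0" "b \<noteq> 0" "q = of_int a / of_int b"
    using rat_nonzero_fraction[OF assms(1)] .
  obtain c e where ce: "c \<noteq> 0" "e \<noteq> 0" "r = of_int c / of_int e"
    using rat_nonzero_fraction[OF assms(2)] .
  have "q * r = of_int (a * c) / of_int (b * e)" using ab ce by simp
  hence "padic_val p (q * r) = int (multiplicity (int p) (a * c)) - int (multiplicity (int p) (b * e))"
    by (intro padic_val_fraction) (use ab ce in auto)
  also have "\<dots> = padic_val p q + padic_val p r"
    using padic_val_fraction[OF ab] padic_val_fraction[OF ce] ab ce
      prime_elem_multiplicity_mult_distrib[OF prime_elem_int_p] by simp
  finally show ?thesis .
qed

lemma padic_val_add:
  assumes "q \<noteq> 0" "r \<noteq> 0" "q + r \<noteq> 0"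
  shows "min (padic_val p q) (padic_val p r) \<le> padic_val p (q + r)"
proof -
  obtain a b where ab: "a \<noteq> 0" "b \<noteq> 0" "q = of_int a / of_int b"
    using rat_nonzero_fraction[OF assms(1)] .
  obtain c e where ce: "c \<noteq> 0" "e \<noteq> 0" "r = of_int c / of_int e"
    using rat_nonzero_fraction[OF assms(2)] .
  let ?m = "multiplicity (int p)"
  have qr: "q + r = of_int (a * e + c * b) / of_int (b * e)" using ab ce by (simp add: field_simps)
  have s0: "a * e + c * b \<noteq> 0"
  proof
    assume "a * e + c * b = 0"
    hence "(of_int (a * e + c * b) :: rat) = 0" by simp
    thus False using qr assms(3) by simp
  qed
  define m where "m = min (?m (a * e)) (?m (c * b))"
  have "int p ^ m dvd a * e" "int p ^ m dvd c * b"
    unfolding m_def by (meson min.cobounded1 min.cobounded2 multiplicity_dvd dvd_trans le_imp_power_dvd)+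
  hence "int p ^ m dvd a * e + c * b" by simp
  moreover have "\<not> is_unit (int p)" using prime_elem_int_p by (rule prime_elem_not_unit)
  ultimately have "m \<le> ?m (a * e + c * b)" using multiplicity_geI[OF s0] by blast
  moreover have "padic_val p (q + r) = int (?m (a * e + c * b)) - int (?m (b * e))"
    using padic_val_fraction[OF s0 _ qr] ab ce by simp
  moreover have "q = of_int (a * e) / of_int (b * e)" "r = of_int (c * b) / of_int (b * e)"
    using ab ce by simp_all
  hence "padic_val p q = int (?m (a * e)) - int (?m (b * e))"
    "padic_val p r = int (?m (c * b)) - int (?m (b * e))"
    using ab ce by (auto intro: padic_val_fraction)
  ultimately show ?thesis unfolding m_def by linarith
qed

lemma padic_abs_nonneg: "0 \<le> padic_abs p q"
  unfolding padic_abs_def by auto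

lemma padic_abs_zero [simp]: "padic_abs p 0 = 0"
  unfolding padic_abs_def by auto

lemma padic_abs_pos: "q \<noteq> 0 \<Longrightarrow> 0 < padic_abs p q"
  unfolding padic_abs_def using prime_gt_0_nat[OF prime_p] by auto

lemma padic_abs_mult: "padic_abs p (q * r) = padic_abs p q * padic_abs p r"
  using padic_val_mult[of q r] prime_gt_0_nat[OF prime_p]
  unfolding padic_abs_def by (simp add: powr_add[symmetric])

lemma padic_abs_triangle: "padic_abs p (q + r) \<le> padic_abs p q + padic_abs p r"
proof (cases "q = 0 \<or> r = 0 \<or> q + r = 0")
  case True
  thus ?thesis using padic_abs_nonneg by auto
next
  case False
  have "padic_abs p (q + r) = real p powr (- real_of_int (padic_val p (q + r)))"
    using False unfolding padic_abs_def by auto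
  also have "\<dots> \<le> real p powr (- real_of_int (min (padic_val p q) (padic_val p r)))"
    using padic_val_add[of q r] False prime_gt_1_nat[OF prime_p] by (intro powr_mono) auto
  also have "\<dots> \<le> padic_abs p q + padic_abs p r"
    using False unfolding padic_abs_def by (cases "padic_val p q \<le> padic_val p r") (auto simp: min_def)
  finally show ?thesis .
qed

lemma padic_abs_uminus [simp]: "padic_abs p (- q) = padic_abs p q"
proof -
  have "padic_val p (-1) = int (multiplicity (int p) (-1)) - int (multiplicity (int p) 1)"
    by (rule padic_val_fraction) auto
  hence "padic_abs p (-1) = 1"
    unfolding padic_abs_def using prime_gt_0_nat[OF prime_p] by (simp add: multiplicity_unit_right)
  thus ?thesis using padic_abs_mult[of "-1" q] by simp
qed

definition padic_bounded :: "(nat \<Rightarrow> rat) \<Rightarrow> bool" where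
  "padic_bounded f = (\<exists>B N. \<forall>n\<ge>N. padic_abs p (f n) \<le> B)"

lemma padic_boundedE:
  assumes "padic_bounded f"
  obtains B N where "0 < B" "\<And>n. N \<le> n \<Longrightarrow> padic_abs p (f n) \<le> B"
proof -
  obtain B N where "\<forall>n\<ge>N. padic_abs p (f n) \<le> B" using assms unfolding padic_bounded_def by auto
  hence "\<forall>n\<ge>N. padic_abs p (f n) \<le> max B 1" by force
  thus ?thesis using that[of "max B 1" N] by auto
qed

lemma padic_null_add:
  assumes "padic_null p f" "padic_null p g"
  shows "padic_null p (\<lambda>n. f n + g n)"
  unfolding padic_null_def
proof (intro allI impI)
  fix e :: real assume "0 < e"
  then obtain N1 N2 where N: "\<forall>n\<ge>N1. padic_abs p (f n) < e/2" "\<forall>n\<ge>N2. padic_abs p (g n) < e/2"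
    using assms unfolding padic_null_def by (meson half_gt_zero)
  have "padic_abs p (f n + g n) < e" if "max N1 N2 \<le> n" for n
  proof -
    have "padic_abs p (f n) < e/2" "padic_abs p (g n) < e/2" using N that by auto
    thus ?thesis using padic_abs_triangle[of "f n" "g n"] by linarith
  qed
  thus "\<exists>N. \<forall>n\<ge>N. padic_abs p (f n + g n) < e" by blast
qed

lemma padic_null_uminus: "padic_null p f \<Longrightarrow> padic_null p (\<lambda>n. - f n)"
  unfolding padic_null_def by simp

lemma padic_null_diff: "padic_null p f \<Longrightarrow> padic_null p g \<Longrightarrow> padic_null p (\<lambda>n. f n - g n)"
  using padic_null_add[OF _ padic_null_uminus] by simp

lemma padic_null_const_iff: "padic_null p (\<lambda>n. c) \<longleftrightarrow> c = 0"
proof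
  assume "padic_null p (\<lambda>n. c)"
  hence "padic_abs p c < padic_abs p c" if "c \<noteq> 0"
    using padic_abs_pos[OF that] unfolding padic_null_def by blast
  thus "c = 0" by auto
qed (simp add: padic_null_def)

lemma padic_null_zero: "padic_null p (\<lambda>n. 0)"
  by (simp add: padic_null_const_iff)

lemma padic_null_mult_bounded:
  assumes "padic_null p f" "padic_bounded g"
  shows "padic_null p (\<lambda>n. f n * g n)"
  unfolding padic_null_def
proof (intro allI impI)
  fix e :: real assume e: "0 < e"
  obtain B N1 where B: "0 < B" "\<And>n. N1 \<le> n \<Longrightarrow> padic_abs p (g n) \<le> B"
    using padic_boundedE[OF assms(2)] by blast
  obtain N2 where N2: "\<forall>n\<ge>N2. padic_abs p (f n) < e / B"
    using assms(1) e B(1) unfolding padic_null_def by (meson divide_pos_pos)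
  have "padic_abs p (f n * g n) < e" if "max N1 N2 \<le> n" for n
  proof -
    have "padic_abs p (f n * g n) \<le> padic_abs p (f n) * B"
      unfolding padic_abs_mult using B that by (intro mult_left_mono) (auto simp: padic_abs_nonneg)
    also have "\<dots> < e / B * B" using N2 that B by (intro mult_strict_right_mono) auto
    finally show ?thesis using B by simp
  qed
  thus "\<exists>N. \<forall>n\<ge>N. padic_abs p (f n * g n) < e" by blast
qed

lemma padic_bounded_mult_null:
  "padic_bounded g \<Longrightarrow> padic_null p f \<Longrightarrow> padic_null p (\<lambda>n. g n * f n)"
  using padic_null_mult_bounded by (simp add: mult.commute)

lemma padic_null_sum:
  "finite S \<Longrightarrow> (\<And>k. k \<in> S \<Longrightarrow> padic_null p (f k)) \<Longrightarrow> padic_null p (\<lambda>n. \<Sum>k\<in>S. f k n)"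
  by (induction S rule: finite_induct) (auto intro: padic_null_add padic_null_zero)

lemma padic_bounded_const: "padic_bounded (\<lambda>n. c)"
  unfolding padic_bounded_def by auto

lemma padic_bounded_add:
  assumes "padic_bounded f" "padic_bounded g"
  shows "padic_bounded (\<lambda>n. f n + g n)"
proof -
  obtain B1 N1 B2 N2 where B: "\<forall>n\<ge>N1. padic_abs p (f n) \<le> B1" "\<forall>n\<ge>N2. padic_abs p (g n) \<le> B2"
    using assms unfolding padic_bounded_def by auto
  have "padic_abs p (f n + g n) \<le> B1 + B2" if "max N1 N2 \<le> n" for n
  proof -
    have "padic_abs p (f n) \<le> B1" "padic_abs p (g n) \<le> B2" using B that by auto
    thus ?thesis using padic_abs_triangle[of "f n" "g n"] by linarith
  qed
  thus ?thesis unfolding padic_bounded_def by blast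
qed

lemma padic_bounded_mult:
  assumes "padic_bounded f" "padic_bounded g"
  shows "padic_bounded (\<lambda>n. f n * g n)"
proof -
  obtain B1 N1 B2 N2 where "0 < B1" "\<And>n. N1 \<le> n \<Longrightarrow> padic_abs p (f n) \<le> B1"
    "0 < B2" "\<And>n. N2 \<le> n \<Longrightarrow> padic_abs p (g n) \<le> B2"
    using padic_boundedE[OF assms(1)] padic_boundedE[OF assms(2)] by metis
  hence "\<forall>n\<ge>max N1 N2. padic_abs p (f n * g n) \<le> B1 * B2"
    by (auto simp: padic_abs_mult intro!: mult_mono padic_abs_nonneg)
  thus ?thesis unfolding padic_bounded_def by blast
qed

lemma padic_bounded_sum:
  "finite S \<Longrightarrow> (\<And>k. k \<in> S \<Longrightarrow> padic_bounded (f k)) \<Longrightarrow> padic_bounded (\<lambda>n. \<Sum>k\<in>S. f k n)"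
  by (induction S rule: finite_induct) (auto intro: padic_bounded_add padic_bounded_const)

lemma padic_bounded_prod:
  "finite S \<Longrightarrow> (\<And>k. k \<in> S \<Longrightarrow> padic_bounded (f k)) \<Longrightarrow> padic_bounded (\<lambda>n. \<Prod>k\<in>S. f k n)"
  by (induction S rule: finite_induct) (auto intro: padic_bounded_mult padic_bounded_const)

lemma padic_null_imp_bounded:
  assumes "padic_null p f"
  shows "padic_bounded f"
proof -
  obtain N where "\<forall>n\<ge>N. padic_abs p (f n) < 1"
    using assms[unfolded padic_null_def, rule_format, of 1] by auto
  thus ?thesis unfolding padic_bounded_def by (meson less_imp_le)
qed

lemma padic_cauchy_imp_bounded:
  assumes "padic_cauchy p f"
  shows "padic_bounded f"
proof -
  obtain N where N: "\<forall>m\<ge>N. \<forall>n\<ge>N. padic_abs p (f m - f n) < 1"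
    using assms[unfolded padic_cauchy_def, rule_format, of 1] by auto
  have "padic_abs p (f n) \<le> padic_abs p (f N) + 1" if "N \<le> n" for n
    using padic_abs_triangle[of "f n - f N" "f N"] N that by force
  thus ?thesis unfolding padic_bounded_def by blast
qed

lemma padic_cauchy_add:
  assumes "padic_cauchy p f" "padic_cauchy p g"
  shows "padic_cauchy p (\<lambda>n. f n + g n)"
  unfolding padic_cauchy_def
proof (intro allI impI)
  fix e :: real assume "0 < e"
  then obtain N1 N2 where N: "\<forall>m\<ge>N1. \<forall>n\<ge>N1. padic_abs p (f m - f n) < e/2"
    "\<forall>m\<ge>N2. \<forall>n\<ge>N2. padic_abs p (g m - g n) < e/2"
    using assms unfolding padic_cauchy_def by (meson half_gt_zero)
  have "padic_abs p (f m + g m - (f n + g n)) < e" if "max N1 N2 \<le> m" "max N1 N2 \<le> n" for m n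
  proof -
    have eq: "f m + g m - (f n + g n) = (f m - f n) + (g m - g n)" by simp
    have "padic_abs p (f m - f n) < e/2" "padic_abs p (g m - g n) < e/2" using N that by auto
    thus ?thesis unfolding eq using padic_abs_triangle[of "f m - f n" "g m - g n"] by linarith
  qed
  thus "\<exists>N. \<forall>m\<ge>N. \<forall>n\<ge>N. padic_abs p (f m + g m - (f n + g n)) < e" by blast
qed

lemma padic_cauchy_const: "padic_cauchy p (\<lambda>n. c)"
  unfolding padic_cauchy_def by auto

lemma padic_cauchy_mult:
  assumes f: "padic_cauchy p f" and g: "padic_cauchy p g"
  shows "padic_cauchy p (\<lambda>n. f n * g n)"
  unfolding padic_cauchy_def
proof (intro allI impI)
  fix e :: real assume e: "0 < e"
  obtain B1 N1 B2 N2 where B: "0 < B1" "\<And>n. N1 \<le> n \<Longrightarrow> padic_abs p (f n) \<le> B1"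
    "0 < B2" "\<And>n. N2 \<le> n \<Longrightarrow> padic_abs p (g n) \<le> B2"
    using padic_boundedE[OF padic_cauchy_imp_bounded[OF f]]
      padic_boundedE[OF padic_cauchy_imp_bounded[OF g]] by metis
  define B where "B = B1 + B2"
  have "0 < B" using B unfolding B_def by simp
  define e' where "e' = e / (4 * B)"
  have e': "0 < e'" using e \<open>0 < B\<close> unfolding e'_def by simp
  obtain N3 N4 where N34: "\<forall>m\<ge>N3. \<forall>n\<ge>N3. padic_abs p (f m - f n) < e'"
    "\<forall>m\<ge>N4. \<forall>n\<ge>N4. padic_abs p (g m - g n) < e'"
    using f g e' unfolding padic_cauchy_def by blast
  have "padic_abs p (f m * g m - f n * g n) < e"
    if mn: "max (max N1 N2) (max N3 N4) \<le> m" "max (max N1 N2) (max N3 N4) \<le> n" for m n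
  proof -
    have "f m * g m - f n * g n = f m * (g m - g n) + (f m - f n) * g n" by (simp add: algebra_simps)
    hence "padic_abs p (f m * g m - f n * g n)
        \<le> padic_abs p (f m) * padic_abs p (g m - g n) + padic_abs p (f m - f n) * padic_abs p (g n)"
      using padic_abs_triangle[of "f m * (g m - g n)" "(f m - f n) * g n"] by (simp add: padic_abs_mult)
    also have "\<dots> \<le> B * e' + e' * B"
    proof -
      have "padic_abs p (f m) \<le> B" "padic_abs p (g n) \<le> B"
        using B(1,3) B(2)[of m] B(4)[of n] mn unfolding B_def by auto
      thus ?thesis using N34 mn e' \<open>0 < B\<close> by (intro add_mono mult_mono) (auto simp: padic_abs_nonneg less_imp_le)
    qed
    also have "\<dots> = e / 2" unfolding e'_def using \<open>0 < B\<close> by simp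
    also have "\<dots> < e" using e by simp
    finally show ?thesis .
  qed
  thus "\<exists>N. \<forall>m\<ge>N. \<forall>n\<ge>N. padic_abs p (f m * g m - f n * g n) < e" by blast
qed

lemma padic_cauchy_sum:
  "finite S \<Longrightarrow> (\<And>k. k \<in> S \<Longrightarrow> padic_cauchy p (f k)) \<Longrightarrow> padic_cauchy p (\<lambda>n. \<Sum>k\<in>S. f k n)"
  by (induction S rule: finite_induct) (auto intro: padic_cauchy_add padic_cauchy_const)

definition padic_bounded_mat :: "nat \<Rightarrow> (nat \<Rightarrow> rat mat) \<Rightarrow> bool" where
  "padic_bounded_mat d X = (\<forall>i<d. \<forall>j<d. padic_bounded (\<lambda>n. X n $$ (i, j)))"

lemma qp_mat_mat_seq: "qp_mat p d X \<Longrightarrow> mat_seq d X"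
  unfolding qp_mat_def mat_seq_def by auto

lemma qp_mat_const: "C \<in> carrier_mat d d \<Longrightarrow> qp_mat p d (\<lambda>n. C)"
  unfolding qp_mat_def by (auto intro: padic_cauchy_const)

lemma qp_mat_mult:
  assumes "qp_mat p d X" "qp_mat p d Y"
  shows "qp_mat p d (\<lambda>n. X n * Y n)"
  unfolding qp_mat_def
proof (intro conjI allI impI)
  have X: "X n \<in> carrier_mat d d" and Y: "Y n \<in> carrier_mat d d" for n
    using assms by (auto dest: qp_mat_mat_seq simp: mat_seqD)
  thus "X n * Y n \<in> carrier_mat d d" for n by simp
  fix i j assume ij: "i < d" "j < d"
  have "padic_cauchy p (\<lambda>n. \<Sum>k<d. X n $$ (i, k) * Y n $$ (k, j))"
    using assms ij unfolding qp_mat_def by (intro padic_cauchy_sum padic_cauchy_mult) auto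
  thus "padic_cauchy p (\<lambda>n. (X n * Y n) $$ (i, j))"
    using index_mult_mat_sum[OF X Y ij] by simp
qed

lemma qp_mat_bounded: "qp_mat p d X \<Longrightarrow> padic_bounded_mat d X"
  unfolding qp_mat_def padic_bounded_mat_def by (auto intro: padic_cauchy_imp_bounded)

lemma padic_bounded_mat_const: "padic_bounded_mat d (\<lambda>n. C)"
  unfolding padic_bounded_mat_def by (auto intro: padic_bounded_const)

lemma padic_bounded_mat_transpose:
  "mat_seq d X \<Longrightarrow> padic_bounded_mat d X \<Longrightarrow> padic_bounded_mat d (\<lambda>n. transpose_mat (X n))"
  unfolding padic_bounded_mat_def by simp

lemma padic_bounded_mat_submatrix:
  assumes "padic_bounded_mat d M"
    and "\<And>n a b. a < m \<Longrightarrow> b < m \<Longrightarrow> N n $$ (a, b) = M n $$ (r a, s b)"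
    and "\<And>a. a < m \<Longrightarrow> r a < d" "\<And>b. b < m \<Longrightarrow> s b < d"
  shows "padic_bounded_mat m N"
  using assms unfolding padic_bounded_mat_def by simp

lemma padic_bounded_det:
  assumes "mat_seq d X" "padic_bounded_mat d X"
  shows "padic_bounded (\<lambda>n. det (X n))"
proof -
  have "padic_bounded (\<lambda>n. \<Sum>q \<in> {q. q permutes {0..<d}}. signof q * (\<Prod>i = 0..<d. X n $$ (i, q i)))"
  proof (intro padic_bounded_sum padic_bounded_mult padic_bounded_const padic_bounded_prod)
    fix q i assume "q \<in> {q. q permutes {0..<d}}" "i \<in> {0..<d}"
    hence "i < d" "q i < d" by (auto dest: permutes_in_image)
    thus "padic_bounded (\<lambda>n. X n $$ (i, q i))" using assms(2) unfolding padic_bounded_mat_def by auto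
  qed (simp_all add: finite_permutations)
  thus ?thesis using det_def'[OF mat_seqD[OF assms(1)]] by simp
qed

lemma qp_mat_eqI: "(\<And>n. X n = Y n) \<Longrightarrow> qp_mat_eq p d X Y"
  unfolding qp_mat_eq_def by (simp add: padic_null_zero)

lemma qp_mat_eq_refl: "qp_mat_eq p d X X"
  by (rule qp_mat_eqI) simp

lemma qp_mat_eq_sym: "qp_mat_eq p d X Y \<Longrightarrow> qp_mat_eq p d Y X"
  unfolding qp_mat_eq_def using padic_null_uminus by fastforce

lemma qp_mat_eq_trans [trans]: "qp_mat_eq p d X Y \<Longrightarrow> qp_mat_eq p d Y Z \<Longrightarrow> qp_mat_eq p d X Z"
  unfolding qp_mat_eq_def using padic_null_add by fastforce

lemma qp_mat_eq_mult_right: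
  assumes "mat_seq d X" "mat_seq d X'" "mat_seq d Y" "qp_mat_eq p d X X'" "padic_bounded_mat d Y"
  shows "qp_mat_eq p d (\<lambda>n. X n * Y n) (\<lambda>n. X' n * Y n)"
  unfolding qp_mat_eq_def
proof (intro allI impI)
  fix i j assume ij: "i < d" "j < d"
  have "padic_null p (\<lambda>n. \<Sum>k<d. (X n $$ (i, k) - X' n $$ (i, k)) * Y n $$ (k, j))"
    using assms(4,5) ij unfolding qp_mat_eq_def padic_bounded_mat_def
    by (intro padic_null_sum padic_null_mult_bounded) auto
  moreover have "(X n * Y n) $$ (i, j) - (X' n * Y n) $$ (i, j)
      = (\<Sum>k<d. (X n $$ (i, k) - X' n $$ (i, k)) * Y n $$ (k, j))" for n
    using index_mult_mat_sum[OF mat_seqD[OF assms(1)] mat_seqD[OF assms(3)] ij]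
      index_mult_mat_sum[OF mat_seqD[OF assms(2)] mat_seqD[OF assms(3)] ij]
    by (simp add: sum_subtractf left_diff_distrib)
  ultimately show "padic_null p (\<lambda>n. (X n * Y n) $$ (i, j) - (X' n * Y n) $$ (i, j))" by simp
qed

lemma qp_mat_eq_mult_left:
  assumes "mat_seq d X" "mat_seq d Y" "mat_seq d Y'" "padic_bounded_mat d X" "qp_mat_eq p d Y Y'"
  shows "qp_mat_eq p d (\<lambda>n. X n * Y n) (\<lambda>n. X n * Y' n)"
  unfolding qp_mat_eq_def
proof (intro allI impI)
  fix i j assume ij: "i < d" "j < d"
  have "padic_null p (\<lambda>n. \<Sum>k<d. X n $$ (i, k) * (Y n $$ (k, j) - Y' n $$ (k, j)))"
    using assms(4,5) ij unfolding qp_mat_eq_def padic_bounded_mat_def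
    by (intro padic_null_sum padic_bounded_mult_null) auto
  moreover have "(X n * Y n) $$ (i, j) - (X n * Y' n) $$ (i, j)
      = (\<Sum>k<d. X n $$ (i, k) * (Y n $$ (k, j) - Y' n $$ (k, j)))" for n
    using index_mult_mat_sum[OF mat_seqD[OF assms(1)] mat_seqD[OF assms(2)] ij]
      index_mult_mat_sum[OF mat_seqD[OF assms(1)] mat_seqD[OF assms(3)] ij]
    by (simp add: sum_subtractf right_diff_distrib)
  ultimately show "padic_null p (\<lambda>n. (X n * Y n) $$ (i, j) - (X n * Y' n) $$ (i, j))" by simp
qed

lemma qp_mat_eq_transpose:
  "mat_seq d X \<Longrightarrow> mat_seq d Y \<Longrightarrow> qp_mat_eq p d X Y
    \<Longrightarrow> qp_mat_eq p d (\<lambda>n. transpose_mat (X n)) (\<lambda>n. transpose_mat (Y n))"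
  unfolding qp_mat_eq_def by simp

text \<open>Expand det M along its last row.\<close>
lemma padic_null_det_topleft:
  assumes M: "mat_seq d M" "padic_bounded_mat d M" and d: "1 \<le> d"
    and row: "\<And>j. j < d - 1 \<Longrightarrow> padic_null p (\<lambda>n. M n $$ (d - 1, j))"
    and diag: "padic_null p (\<lambda>n. M n $$ (d - 1, d - 1) - 1)"
    and det: "padic_null p (\<lambda>n. det (M n) - 1)"
  shows "padic_null p (\<lambda>n. det (topleft d (M n)) - 1)"
proof -
  define D where "D n = det (topleft d (M n))" for n
  define S where "S n = (\<Sum>j<d - 1. M n $$ (d - 1, j) * cofactor (M n) (d - 1) j)" for n
  have "padic_bounded_mat (d - 1) (\<lambda>n. topleft d (M n))"
    using M(2) by (rule padic_bounded_mat_submatrix[where r = id and s = id]) (auto simp: topleft_def)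
  hence D: "padic_bounded D"
    unfolding D_def by (intro padic_bounded_det) (auto simp: mat_seq_def topleft_def)
  have "padic_bounded (\<lambda>n. cofactor (M n) (d - 1) j)" if j: "j < d - 1" for j
  proof -
    have "padic_bounded_mat (d - 1) (\<lambda>n. mat_delete (M n) (d - 1) j)"
      using M(2) by (rule padic_bounded_mat_submatrix[where r = "\<lambda>a. if a < d - 1 then a else Suc a"
          and s = "\<lambda>b. if b < j then b else Suc b"]) (use M(1) j in \<open>auto simp: mat_delete_def\<close>)
    moreover have "mat_seq (d - 1) (\<lambda>n. mat_delete (M n) (d - 1) j)"
      unfolding mat_seq_def mat_delete_def using M(1) by simp
    ultimately show ?thesis
      unfolding cofactor_def by (intro padic_bounded_mult padic_bounded_const padic_bounded_det)
  qed
  hence "padic_null p S"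
    unfolding S_def using row by (intro padic_null_sum padic_null_mult_bounded) auto
  moreover have "(\<lambda>n. D n - 1) = (\<lambda>n. (det (M n) - 1) - S n - (M n $$ (d - 1, d - 1) - 1) * D n)"
    using det_expand_last_row[OF mat_seqD[OF M(1)] d] unfolding D_def S_def
    by (intro ext) (simp add: algebra_simps)
  ultimately show ?thesis
    unfolding D_def[symmetric] by (simp only:) (rule padic_null_diff[OF padic_null_diff[OF det]
        padic_null_mult_bounded[OF diag D]])
qed

lemma SO_Qp_qp_mat: "X \<in> SO_Qp p d \<Longrightarrow> qp_mat p d X"
  unfolding SO_Qp_def by auto

lemma SO_Qp_mat_seq: "X \<in> SO_Qp p d \<Longrightarrow> mat_seq d X"
  by (intro qp_mat_mat_seq SO_Qp_qp_mat)

lemma SO_Qp_bounded: "X \<in> SO_Qp p d \<Longrightarrow> padic_bounded_mat d X"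
  by (intro qp_mat_bounded SO_Qp_qp_mat)

lemma SO_Qp_orthogonal: "X \<in> SO_Qp p d \<Longrightarrow> qp_mat_eq p d (\<lambda>n. transpose_mat (X n) * X n) (\<lambda>n. 1\<^sub>m d)"
  unfolding SO_Qp_def by auto

lemma SO_Qp_det: "X \<in> SO_Qp p d \<Longrightarrow> padic_null p (\<lambda>n. det (X n) - 1)"
  unfolding SO_Qp_def by auto

lemma SO_Qp_mult:
  assumes X: "X \<in> SO_Qp p d" and Y: "Y \<in> SO_Qp p d"
  shows "(\<lambda>n. X n * Y n) \<in> SO_Qp p d"
proof -
  have Xc: "mat_seq d X" and Yc: "mat_seq d Y" using X Y by (auto intro: SO_Qp_mat_seq)
  have XTc: "mat_seq d (\<lambda>n. transpose_mat (X n))" and YTc: "mat_seq d (\<lambda>n. transpose_mat (Y n))"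
    using Xc Yc by (auto intro: mat_seq_transpose)
  have one: "mat_seq d (\<lambda>n. 1\<^sub>m d :: rat mat)" by (simp add: mat_seq_const)
  have "qp_mat_eq p d (\<lambda>n. transpose_mat (X n * Y n) * (X n * Y n))
      (\<lambda>n. transpose_mat (Y n) * ((transpose_mat (X n) * X n) * Y n))"
  proof (rule qp_mat_eqI)
    fix n
    have "X n \<in> carrier_mat d d" "Y n \<in> carrier_mat d d" using Xc Yc by (auto intro: mat_seqD)
    thus "transpose_mat (X n * Y n) * (X n * Y n) = transpose_mat (Y n) * ((transpose_mat (X n) * X n) * Y n)"
      by (simp add: transpose_mult mult_assoc_square)
  qed
  also have "qp_mat_eq p d \<dots> (\<lambda>n. transpose_mat (Y n) * (1\<^sub>m d * Y n))"
    by (intro qp_mat_eq_mult_left qp_mat_eq_mult_right SO_Qp_orthogonal[OF X] SO_Qp_bounded[OF Y]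
        padic_bounded_mat_transpose YTc Yc one mat_seq_mult XTc Xc)
  also have "qp_mat_eq p d \<dots> (\<lambda>n. 1\<^sub>m d)"
    using SO_Qp_orthogonal[OF Y] Yc by (simp add: mat_seqD)
  finally have orth: "qp_mat_eq p d (\<lambda>n. transpose_mat (X n * Y n) * (X n * Y n)) (\<lambda>n. 1\<^sub>m d)" .
  have "padic_bounded (\<lambda>n. det (Y n))"
    using padic_bounded_add[OF padic_null_imp_bounded[OF SO_Qp_det[OF Y]] padic_bounded_const[of 1]]
    by simp
  hence "padic_null p (\<lambda>n. (det (X n) - 1) * det (Y n) + (det (Y n) - 1))"
    by (intro padic_null_add padic_null_mult_bounded SO_Qp_det[OF X] SO_Qp_det[OF Y])
  moreover have "(det (X n) - 1) * det (Y n) + (det (Y n) - 1) = det (X n * Y n) - 1" for n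
    using det_mult[OF mat_seqD[OF Xc] mat_seqD[OF Yc]] by (simp add: algebra_simps)
  ultimately show ?thesis
    unfolding SO_Qp_def using orth qp_mat_mult[OF SO_Qp_qp_mat[OF X] SO_Qp_qp_mat[OF Y]] by simp
qed

lemma H_Qp_SO_Qp: "X \<in> H_Qp p d v \<Longrightarrow> X \<in> SO_Qp p d"
  unfolding H_Qp_def by auto

lemma H_Qp_iff_v_cols:
  assumes d: "1 \<le> d" and v: "v \<in> carrier_vec d" and X: "X \<in> SO_Qp p d"
  shows "X \<in> H_Qp p d v \<longleftrightarrow> qp_mat_eq p d (\<lambda>n. X n * v_cols d v) (\<lambda>n. v_cols d v)"
proof -
  have Xc: "mat_seq d X" using X by (rule SO_Qp_mat_seq)
  have col: "(X n * v_cols d v) $$ (i, j) = (X n *\<^sub>v map_vec rat_of_int v) $ i"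
    if ij: "i < d" "j < d" for n i j
  proof -
    have Xn: "X n \<in> carrier_mat d d" using Xc by (rule mat_seqD)
    have "(X n * v_cols d v) $$ (i, j) = (\<Sum>k<d. X n $$ (i, k) * v_cols d v $$ (k, j))"
      using Xn ij by (intro index_mult_mat_sum) auto
    also have "\<dots> = (\<Sum>k<d. X n $$ (i, k) * map_vec rat_of_int v $ k)"
      using v ij by (intro sum.cong) (auto simp: v_cols_def)
    also have "\<dots> = (X n *\<^sub>v map_vec rat_of_int v) $ i"
      using Xn v ij by (intro index_mult_mat_vec_sum[symmetric]) auto
    finally show ?thesis .
  qed
  have "X \<in> H_Qp p d v \<longleftrightarrow>
      (\<forall>i<d. \<forall>j<d. padic_null p (\<lambda>n. (X n *\<^sub>v map_vec rat_of_int v) $ i - rat_of_int (v $ i)))"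
    unfolding H_Qp_def using X d by auto
  thus ?thesis unfolding qp_mat_eq_def using col by (simp add: v_cols_def)
qed

lemma H_Qp_mult:
  assumes d: "1 \<le> d" and v: "v \<in> carrier_vec d" and X: "X \<in> H_Qp p d v" and Y: "Y \<in> H_Qp p d v"
  shows "(\<lambda>n. X n * Y n) \<in> H_Qp p d v"
proof -
  have XS: "X \<in> SO_Qp p d" and YS: "Y \<in> SO_Qp p d" using X Y by (auto intro: H_Qp_SO_Qp)
  have Xc: "mat_seq d X" and Yc: "mat_seq d Y" using XS YS by (auto intro: SO_Qp_mat_seq)
  have Vc: "mat_seq d (\<lambda>n. v_cols d v)" by (simp add: mat_seq_const)
  have "qp_mat_eq p d (\<lambda>n. (X n * Y n) * v_cols d v) (\<lambda>n. X n * (Y n * v_cols d v))"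
    using mat_seqD[OF Xc] mat_seqD[OF Yc] by (intro qp_mat_eqI mult_assoc_square) auto
  also have "qp_mat_eq p d \<dots> (\<lambda>n. X n * v_cols d v)"
    using Y H_Qp_iff_v_cols[OF d v YS]
    by (intro qp_mat_eq_mult_left Xc mat_seq_mult Yc Vc SO_Qp_bounded[OF XS]) simp
  also have "qp_mat_eq p d \<dots> (\<lambda>n. v_cols d v)" using X H_Qp_iff_v_cols[OF d v XS] by simp
  finally show ?thesis using H_Qp_iff_v_cols[OF d v SO_Qp_mult[OF XS YS]] by simp
qed

lemma H_Zinvp_const_H_Qp:
  assumes g: "g \<in> H_Zinvp p d v" and v: "v \<in> carrier_vec d"
  shows "(\<lambda>n. g) \<in> H_Qp p d v"
proof -
  have gs: "g \<in> SO_set d" "g *\<^sub>v map_vec rat_of_int v = map_vec rat_of_int v"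
    using g unfolding H_Zinvp_def by auto
  have "qp_mat p d (\<lambda>n. g)" by (rule qp_mat_const[OF SO_set_carrier[OF gs(1)]])
  moreover have "qp_mat_eq p d (\<lambda>n. transpose_mat g * g) (\<lambda>n. 1\<^sub>m d)"
    unfolding SO_set_orthogonal[OF gs(1)] by (rule qp_mat_eq_refl)
  moreover have "padic_null p (\<lambda>n. det g - 1)" using gs(1) by (simp add: SO_set_def padic_null_zero)
  ultimately have "(\<lambda>n. g) \<in> SO_Qp p d" unfolding SO_Qp_def by blast
  moreover have "padic_null p (\<lambda>n. (g *\<^sub>v map_vec rat_of_int v) $ i - rat_of_int (v $ i))"
    if "i < d" for i
    using gs(2) v that by (simp add: padic_null_zero)
  ultimately show ?thesis unfolding H_Qp_def by blast
qed

lemma geq_refl: "geq p d x x"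
  by (cases x) (auto intro: qp_mat_eq_refl)

lemma geq_sym: "geq p d x y \<Longrightarrow> geq p d y x"
  by (cases x; cases y) (auto intro: qp_mat_eq_sym)

lemma geq_trans: "geq p d x y \<Longrightarrow> geq p d y z \<Longrightarrow> geq p d x z"
  by (cases x; cases y; cases z) (auto intro: qp_mat_eq_trans)

lemma geq_mult_Gamma:
  assumes "gcarrier d x" "gcarrier d y" "geq p d x y" "g \<in> Gamma_set p d"
  shows "geq p d (gmul x g) (gmul y g)"
proof -
  obtain a b c e a' b' c' e' where xy: "x = ((a, b), (c, e))" "y = ((a', b'), (c', e'))"
    by (cases x; cases y) auto
  obtain g1 g2 where g: "g = ((map_mat of_rat g1, \<lambda>n. g1), (map_mat of_rat g2, \<lambda>n. g2))"
    and gc: "g1 \<in> carrier_mat d d" "g2 \<in> carrier_mat d d"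
    using assms(4) unfolding Gamma_set_def SO_set_def ASL_set_def by auto
  have c: "mat_seq d b" "mat_seq d e" "mat_seq d b'" "mat_seq d e'"
    using assms(1,2) unfolding xy gcarrier_def by auto
  have "qp_mat_eq p d (\<lambda>n. b n * g1) (\<lambda>n. b' n * g1)" "qp_mat_eq p d (\<lambda>n. e n * g2) (\<lambda>n. e' n * g2)"
    using assms(3) unfolding xy
    by (auto intro!: qp_mat_eq_mult_right c mat_seq_const gc padic_bounded_mat_const)
  thus ?thesis using assms(3) unfolding xy g by (simp add: seq_mult_def)
qed

lemma YcosI: "y \<in> G_set p d \<Longrightarrow> \<gamma> \<in> Gamma_set p d \<Longrightarrow> geq p d y (gmul x \<gamma>) \<Longrightarrow> y \<in> Ycos p d x"
  unfolding Ycos_def by blast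

lemma YcosE:
  assumes "y \<in> Ycos p d x"
  obtains \<gamma> where "y \<in> G_set p d" "\<gamma> \<in> Gamma_set p d" "geq p d y (gmul x \<gamma>)"
  using assms unfolding Ycos_def by blast

lemma Ycos_subset:
  assumes d: "1 \<le> d" and A: "gcarrier d A" and B: "gcarrier d B" and \<gamma>: "\<gamma> \<in> Gamma_set p d"
    and e: "geq p d A (gmul B \<gamma>)"
  shows "Ycos p d A \<subseteq> Ycos p d B"
proof
  fix y assume "y \<in> Ycos p d A"
  then obtain g where y: "y \<in> G_set p d" and g: "g \<in> Gamma_set p d" and yA: "geq p d y (gmul A g)"
    by (rule YcosE)
  have \<gamma>c: "gcarrier d \<gamma>" and gc: "gcarrier d g" using \<gamma> g by (auto intro: Gamma_set_gcarrier)
  have "geq p d (gmul A g) (gmul (gmul B \<gamma>) g)"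
    using gmul_gcarrier[OF B \<gamma>c] by (intro geq_mult_Gamma A e g)
  also have "gmul (gmul B \<gamma>) g = gmul B (gmul \<gamma> g)" by (rule gmul_assoc[OF B \<gamma>c gc])
  finally have "geq p d y (gmul B (gmul \<gamma> g))" by (rule geq_trans[OF yA])
  thus "y \<in> Ycos p d B" by (rule YcosI[OF y Gamma_set_mult[OF d \<gamma> g]])
qed

lemma Ycos_eq:
  assumes d: "1 \<le> d" and A: "gcarrier d A" and B: "gcarrier d B"
    and \<gamma>: "\<gamma> \<in> Gamma_set p d" and \<gamma>': "\<gamma>' \<in> Gamma_set p d" and inv: "gmul \<gamma> \<gamma>' = gone d"
    and e: "geq p d A (gmul B \<gamma>)"
  shows "Ycos p d A = Ycos p d B"
proof
  show "Ycos p d A \<subseteq> Ycos p d B" by (rule Ycos_subset[OF d A B \<gamma> e])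
  have \<gamma>c: "gcarrier d \<gamma>" and \<gamma>'c: "gcarrier d \<gamma>'" using \<gamma> \<gamma>' by (auto intro: Gamma_set_gcarrier)
  have "geq p d (gmul A \<gamma>') (gmul (gmul B \<gamma>) \<gamma>')"
    using gmul_gcarrier[OF B \<gamma>c] by (intro geq_mult_Gamma A e \<gamma>')
  also have "gmul (gmul B \<gamma>) \<gamma>' = B" unfolding gmul_assoc[OF B \<gamma>c \<gamma>'c] inv by (rule gmul_gone[OF B])
  finally show "Ycos p d B \<subseteq> Ycos p d A" by (rule Ycos_subset[OF d B A \<gamma>' geq_sym])
qed

lemma Ycos_self:
  assumes "1 \<le> d" "x \<in> G_set p d"
  shows "x \<in> Ycos p d x"
proof (rule YcosI[OF assms(2) gone_Gamma_set[OF assms(1)]])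
  show "geq p d x (gmul x (gone d))" unfolding gmul_gone[OF G_set_gcarrier[OF assms(2)]] by (rule geq_refl)
qed

lemma H_Qp_v_cols_transpose:
  assumes d: "1 \<le> d" and v: "v \<in> carrier_vec d" and X: "X \<in> H_Qp p d v"
  shows "qp_mat_eq p d (\<lambda>n. transpose_mat (v_cols d v) * X n) (\<lambda>n. transpose_mat (v_cols d v))"
proof -
  let ?V = "v_cols d v"
  have XS: "X \<in> SO_Qp p d" using X by (rule H_Qp_SO_Qp)
  have Xc: "mat_seq d X" using XS by (rule SO_Qp_mat_seq)
  have XTc: "mat_seq d (\<lambda>n. transpose_mat (X n))" using Xc by (rule mat_seq_transpose)
  have Vc: "mat_seq d (\<lambda>n. ?V)" by (simp add: mat_seq_const)
  have "qp_mat_eq p d (\<lambda>n. transpose_mat (X n) * ?V) (\<lambda>n. transpose_mat (X n) * (X n * ?V))"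
  proof (rule qp_mat_eq_mult_left)
    show "qp_mat_eq p d (\<lambda>n. ?V) (\<lambda>n. X n * ?V)"
      using X H_Qp_iff_v_cols[OF d v XS] by (simp add: qp_mat_eq_sym)
  qed (use XTc Vc Xc SO_Qp_bounded[OF XS] in \<open>auto intro: mat_seq_mult padic_bounded_mat_transpose\<close>)
  also have "qp_mat_eq p d \<dots> (\<lambda>n. (transpose_mat (X n) * X n) * ?V)"
    using mat_seqD[OF Xc] by (intro qp_mat_eqI assoc_mult_mat[symmetric, of _ d d _ d _ d]) auto
  also have "qp_mat_eq p d \<dots> (\<lambda>n. 1\<^sub>m d * ?V)"
    by (intro qp_mat_eq_mult_right mat_seq_mult XTc Xc Vc SO_Qp_orthogonal[OF XS]
        padic_bounded_mat_const) (simp add: mat_seq_const)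
  also have "qp_mat_eq p d \<dots> (\<lambda>n. ?V)" by (rule qp_mat_eqI, rule left_mult_one_mat[OF v_cols_carrier])
  finally have "qp_mat_eq p d (\<lambda>n. transpose_mat (transpose_mat (X n) * ?V)) (\<lambda>n. transpose_mat ?V)"
    using XTc Vc by (intro qp_mat_eq_transpose mat_seq_mult)
  moreover have "transpose_mat (transpose_mat (X n) * ?V) = transpose_mat ?V * X n" for n
    using transpose_mult[of "transpose_mat (X n)" d d ?V d] mat_seqD[OF Xc] by simp
  ultimately show ?thesis by simp
qed
end

lemma primitive_vec_nonzero:
  assumes "primitive_vec d v"
  obtains i where "i < d" "v $ i \<noteq> 0"
proof -
  have "\<not> is_unit (2::int)" by simp
  hence "\<not> (\<forall>i<d. (2::int) dvd v $ i)" using assms unfolding primitive_vec_def by blast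
  thus ?thesis using that by force
qed

lemma primitive_vec_self_dot_pos:
  assumes "primitive_vec d v"
  shows "0 < v \<bullet> v"
proof -
  obtain i where i: "i < d" "v $ i \<noteq> 0" using primitive_vec_nonzero[OF assms] .
  have v: "dim_vec v = d" using assms unfolding primitive_vec_def by auto
  have "0 < v $ i * v $ i" using i(2) by (auto simp: zero_less_mult_iff linorder_neq_iff)
  also have "\<dots> \<le> (\<Sum>k<d. v $ k * v $ k)" using i(1) by (intro member_le_sum) auto
  also have "\<dots> = v \<bullet> v" using v by (simp add: scalar_prod_def lessThan_atLeast0)
  finally show ?thesis .
qed

lemma vnorm_pos: "primitive_vec d v \<Longrightarrow> 0 < vnorm v"
  unfolding vnorm_def using primitive_vec_self_dot_pos by simp

locale primitive_frame =
  fixes d :: nat and v :: "int vec" and gv :: "int mat"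
  assumes two_le_d: "2 \<le> d"
    and primitive: "primitive_vec d v"
    and gv_valid: "valid_gv d v gv"
begin

lemma one_le_d: "1 \<le> d"
  using two_le_d by simp

lemma v_carrier [simp]: "v \<in> carrier_vec d"
  and dim_v [simp]: "dim_vec v = d"
  using primitive unfolding primitive_vec_def by auto

lemma gv_carrier [simp]: "gv \<in> carrier_mat d d"
  and dim_gv [simp]: "dim_row gv = d" "dim_col gv = d"
  and det_gv: "det gv = 1"
  using gv_valid unfolding valid_gv_def by auto

lemma v_dot_col_gv: "j < d - 1 \<Longrightarrow> (\<Sum>i<d. v $ i * gv $$ (i, j)) = 0"
proof -
  assume j: "j < d - 1"
  have "col gv j \<bullet> v = 0" using gv_valid j unfolding valid_gv_def Lambda_def by auto
  moreover have "col gv j \<bullet> v = (\<Sum>i<d. v $ i * gv $$ (i, j))"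
    using j by (auto simp: scalar_prod_def lessThan_atLeast0 intro!: sum.cong)
  ultimately show ?thesis by simp
qed

text \<open>v^T = (v^T g_v) g_v^-1, and v^T g_v vanishes except in its last entry.\<close>
lemma v_eq_last_row_adj:
  assumes i: "i < d"
  shows "v $ i = (\<Sum>k<d. v $ k * gv $$ (k, d - 1)) * adj_mat gv $$ (d - 1, i)"
proof -
  let ?A = "adj_mat gv"
  have A: "?A \<in> carrier_mat d d" "gv * ?A = 1\<^sub>m d" using adj_mat[OF gv_carrier] det_gv by auto
  have "v $ i = (\<Sum>k<d. v $ k * (gv * ?A) $$ (k, i))"
    using A(2) i by (simp add: sum.delta' if_distrib cong: if_cong)
  also have "\<dots> = (\<Sum>k<d. \<Sum>j<d. v $ k * gv $$ (k, j) * ?A $$ (j, i))"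
    using index_mult_mat_sum[OF gv_carrier A(1) _ i]
    by (intro sum.cong refl) (simp add: sum_distrib_left mult.assoc del: index_mult_mat)
  also have "\<dots> = (\<Sum>j<d. (\<Sum>k<d. v $ k * gv $$ (k, j)) * ?A $$ (j, i))"
    by (subst sum.swap) (simp add: sum_distrib_right)
  also have "\<dots> = (\<Sum>j<d - 1. (\<Sum>k<d. v $ k * gv $$ (k, j)) * ?A $$ (j, i))
      + (\<Sum>k<d. v $ k * gv $$ (k, d - 1)) * ?A $$ (d - 1, i)"
    by (rule sum_lessThan_split_last[OF one_le_d])
  finally show ?thesis by (simp add: v_dot_col_gv)
qed

text \<open>Cramer's rule expresses the orientation determinant through the last coordinate of
  g_v^-1 v; comparing with the previous lemma gives the sign.\<close>
lemma v_dot_last_col_gv_pos: "0 < (\<Sum>k<d. v $ k * gv $$ (k, d - 1))"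
proof -
  let ?A = "adj_mat gv" and ?t = "\<Sum>k<d. v $ k * gv $$ (k, d - 1)"
  have A: "?A \<in> carrier_mat d d" "gv * ?A = 1\<^sub>m d" using adj_mat[OF gv_carrier] det_gv by auto
  define x where "x = ?A *\<^sub>v v"
  have x: "x \<in> carrier_vec d" unfolding x_def using A(1) by simp
  have "gv *\<^sub>v x = (gv * ?A) *\<^sub>v v"
    unfolding x_def using A(1) by (intro assoc_mult_mat_vec[symmetric]) auto
  hence gvx: "gv *\<^sub>v x = v" using A(2) by simp
  have "replace_col gv v (d - 1) = mat d d (\<lambda>(i, j). if j < d - 1 then gv $$ (i, j) else v $ i)"
    by (rule eq_matI) (auto simp: replace_col_def)
  hence "0 < x $ (d - 1)"
    using gv_valid cramer_lemma_mat[OF gv_carrier x, of "d - 1"] gvx det_gv one_le_d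
    unfolding valid_gv_def by simp
  moreover have "v \<bullet> v = ?t * x $ (d - 1)"
  proof -
    have "v \<bullet> v = (\<Sum>i<d. v $ i * v $ i)" by (simp add: scalar_prod_def lessThan_atLeast0)
    also have "\<dots> = (\<Sum>i<d. v $ i * (?t * ?A $$ (d - 1, i)))"
    proof (intro sum.cong refl)
      fix i assume "i \<in> {..<d}"
      thus "v $ i * v $ i = v $ i * (?t * ?A $$ (d - 1, i))"
        using v_eq_last_row_adj[of i] by simp
    qed
    also have "\<dots> = ?t * (\<Sum>i<d. ?A $$ (d - 1, i) * v $ i)"
      by (simp add: sum_distrib_left mult_ac)
    also have "(\<Sum>i<d. ?A $$ (d - 1, i) * v $ i) = x $ (d - 1)"
      unfolding x_def using A(1) one_le_d by (intro index_mult_mat_vec_sum[symmetric]) auto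
    finally show ?thesis .
  qed
  ultimately show ?thesis
    using primitive_vec_self_dot_pos[OF primitive] by (simp add: zero_less_mult_iff)
qed

text \<open>That is, v^T g_v = e_d^T: the last entry divides every entry of the primitive vector v,
  hence is a unit, and it is positive by the orientation of g_v.\<close>
lemma v_mult_gv:
  assumes j: "j < d"
  shows "(\<Sum>i<d. v $ i * gv $$ (i, j)) = (if j = d - 1 then 1 else 0)"
proof -
  let ?t = "\<Sum>k<d. v $ k * gv $$ (k, d - 1)"
  have "?t dvd v $ i" if "i < d" for i
    unfolding v_eq_last_row_adj[OF that] by simp
  hence "is_unit ?t" using primitive unfolding primitive_vec_def by blast
  hence "?t = 1 \<or> ?t = -1" by auto
  hence "?t = 1" using v_dot_last_col_gv_pos by linarith
  thus ?thesis using j v_dot_col_gv by auto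
qed

lemma inv_gv_last_row:
  assumes k: "k < d"
  shows "inv_mat d (map_mat (of_int :: int \<Rightarrow> 'a :: comm_ring_1) gv) $$ (d - 1, k) = of_int (v $ k)"
proof -
  let ?A = "adj_mat gv"
  have A: "?A \<in> carrier_mat d d" "gv * ?A = 1\<^sub>m d" using adj_mat[OF gv_carrier] det_gv by auto
  have "v $ k = (\<Sum>i<d. v $ i * gv $$ (i, d - 1)) * ?A $$ (d - 1, k)"
    by (rule v_eq_last_row_adj[OF k])
  hence "v $ k = ?A $$ (d - 1, k)" using v_mult_gv[of "d - 1"] one_le_d by simp
  thus ?thesis using inv_mat_of_int(1)[OF gv_carrier det_gv, where 'a = 'a] A(1) k one_le_d by simp
qed

abbreviation gvQ :: "rat mat" where
  "gvQ \<equiv> map_mat rat_of_int gv"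

abbreviation gvQ_inv :: "rat mat" where
  "gvQ_inv \<equiv> inv_mat d (map_mat rat_of_int gv)"

lemma gvQ: "gvQ \<in> carrier_mat d d" "gvQ_inv \<in> carrier_mat d d"
  "gvQ * gvQ_inv = 1\<^sub>m d" "gvQ_inv * gvQ = 1\<^sub>m d"
  using inv_mat_of_int[OF gv_carrier det_gv] by auto

lemma conj_Qp_apply: "conj_Qp d gv X n = gvQ_inv * X n * gvQ"
  unfolding conj_Qp_def by simp

lemma conj_Qp_const: "conj_Qp d gv (\<lambda>n. g) = (\<lambda>n. gvQ_inv * g * gvQ)"
  unfolding conj_Qp_def by simp

lemma conj_Qp_mat_seq: "mat_seq d X \<Longrightarrow> mat_seq d (conj_Qp d gv X)"
  unfolding mat_seq_def conj_Qp_apply using gvQ by simp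

lemma conj_Qp_seq_mult:
  assumes "mat_seq d X" "mat_seq d Y"
  shows "conj_Qp d gv (seq_mult X Y) = seq_mult (conj_Qp d gv X) (conj_Qp d gv Y)"
proof
  fix n
  have "X n \<in> carrier_mat d d" "Y n \<in> carrier_mat d d" using assms by (auto intro: mat_seqD)
  thus "conj_Qp d gv (seq_mult X Y) n = seq_mult (conj_Qp d gv X) (conj_Qp d gv Y) n"
    unfolding seq_mult_def conj_Qp_apply using gvQ
    by (simp add: mult_assoc_square[of _ d] mult_cancel_square[of _ d])
qed

lemma index_inv_gv_mult_last_row:
  assumes Z: "Z \<in> carrier_mat d d" and j: "j < d"
  shows "(gvQ_inv * Z) $$ (d - 1, j) = (transpose_mat (v_cols d v) * Z) $$ (d - 1, j)"
proof -
  have last: "d - 1 < d" using one_le_d by simp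
  have "(gvQ_inv * Z) $$ (d - 1, j) = (\<Sum>k<d. gvQ_inv $$ (d - 1, k) * Z $$ (k, j))"
    by (rule index_mult_mat_sum[OF gvQ(2) Z last j])
  also have "\<dots> = (\<Sum>k<d. transpose_mat (v_cols d v) $$ (d - 1, k) * Z $$ (k, j))"
  proof (intro sum.cong refl)
    fix k assume "k \<in> {..<d}"
    hence "gvQ_inv $$ (d - 1, k) = transpose_mat (v_cols d v) $$ (d - 1, k)"
      using inv_gv_last_row[of k] last by (simp add: v_cols_def)
    thus "gvQ_inv $$ (d - 1, k) * Z $$ (k, j)
        = transpose_mat (v_cols d v) $$ (d - 1, k) * Z $$ (k, j)" by simp
  qed
  also have "\<dots> = (transpose_mat (v_cols d v) * Z) $$ (d - 1, j)"
    by (rule index_mult_mat_sum[symmetric]) (use Z last j in auto)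
  finally show ?thesis .
qed

lemma index_v_cols_gv_last_row:
  assumes j: "j < d"
  shows "(transpose_mat (v_cols d v) * gvQ) $$ (d - 1, j) = (if j = d - 1 then 1 else 0)"
proof -
  have last: "d - 1 < d" using one_le_d by simp
  have "(transpose_mat (v_cols d v) * gvQ) $$ (d - 1, j)
      = (\<Sum>k<d. transpose_mat (v_cols d v) $$ (d - 1, k) * gvQ $$ (k, j))"
    by (rule index_mult_mat_sum) (use last j in auto)
  also have "\<dots> = rat_of_int (\<Sum>k<d. v $ k * gv $$ (k, j))"
    using last j by (simp add: v_cols_def)
  finally show ?thesis using v_mult_gv[OF j] by simp
qed

end

locale primitive_frame_padic = primitive_frame + padic_prime
begin

lemma qp_mat_eq_conj_Qp:
  assumes "mat_seq d X" "mat_seq d Y" "qp_mat_eq p d X Y"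
  shows "qp_mat_eq p d (conj_Qp d gv X) (conj_Qp d gv Y)"
proof -
  have "qp_mat_eq p d (\<lambda>n. gvQ_inv * X n) (\<lambda>n. gvQ_inv * Y n)"
    using assms gvQ by (intro qp_mat_eq_mult_left mat_seq_const padic_bounded_mat_const)
  hence "qp_mat_eq p d (\<lambda>n. gvQ_inv * X n * gvQ) (\<lambda>n. gvQ_inv * Y n * gvQ)"
    using assms gvQ by (intro qp_mat_eq_mult_right mat_seq_mult mat_seq_const padic_bounded_mat_const)
  thus ?thesis unfolding conj_Qp_def .
qed

lemma qp_mat_conj_Qp: "qp_mat p d X \<Longrightarrow> qp_mat p d (conj_Qp d gv X)"
  unfolding conj_Qp_def by (rule qp_mat_mult[OF qp_mat_mult[OF qp_mat_const[OF gvQ(2)]] qp_mat_const[OF gvQ(1)]])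

lemma det_conj_Qp:
  assumes "X n \<in> carrier_mat d d"
  shows "det (conj_Qp d gv X n) = det (X n)"
proof -
  have "det (conj_Qp d gv X n) = det (X n) * (det gvQ_inv * det gvQ)"
    unfolding conj_Qp_apply det_mult[OF mult_carrier_square[OF gvQ(2) assms] gvQ(1)]
      det_mult[OF gvQ(2) assms] by simp
  also have "det gvQ_inv * det gvQ = 1" using det_mult[OF gvQ(2,1)] gvQ(4) by simp
  finally show ?thesis by simp
qed

text \<open>The last row of g_v^-1 is v^T, and v^T X tends to v^T because X is p-adically orthogonal
  and fixes v.\<close>
lemma conj_Qp_last_row:
  assumes X: "X \<in> H_Qp p d v" and j: "j < d"
  shows "padic_null p (\<lambda>n. conj_Qp d gv X n $$ (d - 1, j) - (if j = d - 1 then 1 else 0))"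
proof -
  let ?V = "transpose_mat (v_cols d v)"
  have Xc: "mat_seq d X" using X by (intro SO_Qp_mat_seq H_Qp_SO_Qp)
  have "conj_Qp d gv X n $$ (d - 1, j) = (?V * X n * gvQ) $$ (d - 1, j)" for n
  proof -
    have XG: "X n * gvQ \<in> carrier_mat d d" using mat_seqD[OF Xc] gvQ(1) by simp
    have V: "?V \<in> carrier_mat d d" by simp
    have "conj_Qp d gv X n = gvQ_inv * (X n * gvQ)" "?V * X n * gvQ = ?V * (X n * gvQ)"
      unfolding conj_Qp_apply using mat_seqD[OF Xc] gvQ V by (simp_all add: mult_assoc_square[of _ d])
    thus ?thesis using index_inv_gv_mult_last_row[OF XG j] by simp
  qed
  moreover have "qp_mat_eq p d (\<lambda>n. ?V * X n * gvQ) (\<lambda>n. ?V * gvQ)"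
    using H_Qp_v_cols_transpose[OF one_le_d v_carrier X] Xc gvQ(1)
    by (intro qp_mat_eq_mult_right mat_seq_const mat_seq_mult padic_bounded_mat_const) auto
  hence "padic_null p (\<lambda>n. (?V * X n * gvQ) $$ (d - 1, j) - (?V * gvQ) $$ (d - 1, j))"
    using j one_le_d unfolding qp_mat_eq_def by simp
  ultimately show ?thesis using index_v_cols_gv_last_row[OF j] by simp
qed

lemma conj_Qp_ASL_Qp:
  assumes X: "X \<in> H_Qp p d v"
  shows "conj_Qp d gv X \<in> ASL_Qp p d"
proof -
  have XS: "X \<in> SO_Qp p d" using X by (rule H_Qp_SO_Qp)
  define M where "M = conj_Qp d gv X"
  have Mq: "qp_mat p d M" unfolding M_def by (rule qp_mat_conj_Qp[OF SO_Qp_qp_mat[OF XS]])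
  have row_off: "padic_null p (\<lambda>n. M n $$ (d - 1, j))" if "j < d - 1" for j
    using conj_Qp_last_row[OF X, of j] that unfolding M_def by simp
  moreover have row_diag: "padic_null p (\<lambda>n. M n $$ (d - 1, d - 1) - 1)"
    using conj_Qp_last_row[OF X, of "d - 1"] one_le_d unfolding M_def by simp
  moreover have "padic_null p (\<lambda>n. det (M n) - 1)"
    unfolding M_def using SO_Qp_det[OF XS] det_conj_Qp[OF mat_seqD[OF SO_Qp_mat_seq[OF XS]]] by simp
  ultimately have "padic_null p (\<lambda>n. det (topleft d (M n)) - 1)"
    by (intro padic_null_det_topleft[OF qp_mat_mat_seq[OF Mq] qp_mat_bounded[OF Mq] one_le_d])
  thus ?thesis
    unfolding M_def[symmetric] ASL_Qp_def using Mq row_off row_diag by auto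
qed

text \<open>A constant sequence is null only if it is zero, so the limit conditions defining
  ASL(Q_p) become exact equations for a rational matrix.\<close>
lemma conj_H_Zinvp_ASL_set:
  assumes g: "g \<in> H_Zinvp p d v"
  shows "gvQ_inv * g * gvQ \<in> ASL_set d"
proof -
  let ?C = "gvQ_inv * g * gvQ"
  have "conj_Qp d gv (\<lambda>n. g) \<in> ASL_Qp p d"
    by (rule conj_Qp_ASL_Qp[OF H_Zinvp_const_H_Qp[OF g v_carrier]])
  hence "?C \<in> carrier_mat d d" "\<forall>j<d - 1. padic_null p (\<lambda>n. ?C $$ (d - 1, j))"
    "padic_null p (\<lambda>n. ?C $$ (d - 1, d - 1) - 1)" "padic_null p (\<lambda>n. det (topleft d ?C) - 1)"
    unfolding ASL_Qp_def qp_mat_def conj_Qp_def by auto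
  thus ?thesis unfolding ASL_set_def by (simp add: padic_null_const_iff)
qed

end

section \<open>The real place\<close>

locale orbit_frame = primitive_frame +
  fixes kv :: "real mat"
  assumes kv_valid: "valid_kv d v kv"
begin

lemma kv_SO_set: "kv \<in> SO_set d"
  and kv_v: "kv *\<^sub>v map_vec real_of_int v = vnorm v \<cdot>\<^sub>v e_last d"
  using kv_valid unfolding valid_kv_def by auto

lemma kv_carrier: "kv \<in> carrier_mat d d" "transpose_mat kv \<in> carrier_mat d d"
  using SO_set_carrier[OF kv_SO_set] by auto

lemma dim_kv [simp]: "dim_row kv = d" "dim_col kv = d"
  using kv_carrier by auto

lemma vR_carrier [simp]: "map_vec real_of_int v \<in> carrier_vec d"
  and gvR_carrier [simp]: "map_mat real_of_int gv \<in> carrier_mat d d"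
  by simp_all

lemma transpose_kv_e_last: "transpose_mat kv *\<^sub>v e_last d = (1 / vnorm v) \<cdot>\<^sub>v map_vec real_of_int v"
proof -
  have "map_vec real_of_int v = (transpose_mat kv * kv) *\<^sub>v map_vec real_of_int v"
    using SO_set_orthogonal[OF kv_SO_set] by simp
  also have "\<dots> = transpose_mat kv *\<^sub>v (kv *\<^sub>v map_vec real_of_int v)"
    using kv_carrier by simp
  also have "\<dots> = vnorm v \<cdot>\<^sub>v (transpose_mat kv *\<^sub>v e_last d)"
    unfolding kv_v using kv_carrier by (simp add: mult_mat_vec)
  finally show ?thesis using vnorm_pos[OF primitive] by (simp add: smult_smult_assoc)
qed

lemma kv_last_row:
  assumes i: "i < d"
  shows "vnorm v * kv $$ (d - 1, i) = real_of_int (v $ i)"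
proof -
  have "kv $$ (d - 1, i) = (\<Sum>k<d. transpose_mat kv $$ (i, k) * e_last d $ k)"
    using i one_le_d by (simp add: index_e_last sum.delta' if_distrib cong: if_cong)
  also have "\<dots> = (transpose_mat kv *\<^sub>v e_last d) $ i"
    using i kv_carrier by (intro index_mult_mat_vec_sum[symmetric]) auto
  finally show ?thesis using i vnorm_pos[OF primitive] by (simp add: transpose_kv_e_last)
qed

definition stab_to_K :: "real mat \<Rightarrow> real mat" where
  "stab_to_K h = kv * h * transpose_mat kv"

definition K_to_stab :: "real mat \<Rightarrow> real mat" where
  "K_to_stab k = transpose_mat kv * k * kv"

lemma kv_mult_stab: "h \<in> carrier_mat d d \<Longrightarrow> kv * h = stab_to_K h * kv"
  unfolding stab_to_K_def using SO_set_orthogonal[OF kv_SO_set] kv_carrier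
  by (simp add: mult_assoc_square[of _ d] mult_cancel_square[of _ d])

lemma stab_to_K_K_to_stab: "k \<in> carrier_mat d d \<Longrightarrow> stab_to_K (K_to_stab k) = k"
  unfolding stab_to_K_def K_to_stab_def using SO_set_right_inverse[OF kv_SO_set] kv_carrier
  by (simp add: mult_assoc_square[of _ d] mult_cancel_square[of _ d])

lemma stab_to_K_K_set:
  assumes "h \<in> H_R d v"
  shows "stab_to_K h \<in> K_set d"
proof -
  have h: "h \<in> SO_set d" "h *\<^sub>v map_vec real_of_int v = map_vec real_of_int v"
    using assms unfolding H_R_def by auto
  have hc: "h \<in> carrier_mat d d" using h(1) by (rule SO_set_carrier)
  have "stab_to_K h *\<^sub>v e_last d = (kv * h) *\<^sub>v (transpose_mat kv *\<^sub>v e_last d)"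
    unfolding stab_to_K_def
    by (rule assoc_mult_mat_vec[OF mult_carrier_square[OF kv_carrier(1) hc] kv_carrier(2) e_last_carrier])
  also have "\<dots> = (1 / vnorm v) \<cdot>\<^sub>v ((kv * h) *\<^sub>v map_vec real_of_int v)"
    unfolding transpose_kv_e_last by (rule mult_mat_vec[OF mult_carrier_square[OF kv_carrier(1) hc] vR_carrier])
  also have "(kv * h) *\<^sub>v map_vec real_of_int v = vnorm v \<cdot>\<^sub>v e_last d"
    using hc kv_carrier h(2) kv_v by simp
  finally have "stab_to_K h *\<^sub>v e_last d = e_last d"
    using vnorm_pos[OF primitive] by (simp add: smult_smult_assoc)
  moreover have "stab_to_K h \<in> SO_set d"
    unfolding stab_to_K_def by (intro SO_set_mult SO_set_transpose kv_SO_set h(1))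
  ultimately show ?thesis unfolding K_set_def by simp
qed

lemma K_to_stab_H_R:
  assumes "k \<in> K_set d"
  shows "K_to_stab k \<in> H_R d v"
proof -
  have k: "k \<in> carrier_mat d d" "k *\<^sub>v e_last d = e_last d"
    using assms unfolding K_set_def by (auto simp: SO_set_carrier)
  have "K_to_stab k *\<^sub>v map_vec real_of_int v = (transpose_mat kv * k) *\<^sub>v (kv *\<^sub>v map_vec real_of_int v)"
    unfolding K_to_stab_def
    by (rule assoc_mult_mat_vec[OF mult_carrier_square[OF kv_carrier(2) k(1)] kv_carrier(1) vR_carrier])
  also have "\<dots> = vnorm v \<cdot>\<^sub>v (transpose_mat kv *\<^sub>v (k *\<^sub>v e_last d))"
    unfolding kv_v using k(1) kv_carrier by (simp add: mult_mat_vec)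
  also have "\<dots> = map_vec real_of_int v"
    unfolding k(2) transpose_kv_e_last using vnorm_pos[OF primitive] by (simp add: smult_smult_assoc)
  finally have "K_to_stab k *\<^sub>v map_vec real_of_int v = map_vec real_of_int v" .
  moreover have "K_to_stab k \<in> SO_set d"
    unfolding K_to_stab_def by (intro SO_set_mult SO_set_transpose kv_SO_set K_set_SO_set[OF assms])
  ultimately show ?thesis unfolding H_R_def by simp
qed

definition akg :: "real mat" where
  "akg = a_mat d v * kv * map_mat real_of_int gv"

lemma akg_carrier [simp]: "akg \<in> carrier_mat d d"
  unfolding akg_def using kv_carrier by simp

text \<open>The last row of a_v k_v g_v is |v| (v/|v|)^T g_v = v^T g_v = e_d^T.\<close>
lemma akg_last_row: "last_row_unit d akg"
  unfolding last_row_unit_def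
proof (intro allI impI)
  fix j assume j: "j < d"
  have last: "d - 1 < d" using one_le_d by simp
  let ?KG = "kv * map_mat real_of_int gv"
  have KG: "?KG \<in> carrier_mat d d" using kv_carrier by simp
  have a: "a_mat d v $$ (i, l) = (if i = l then (if i = d - 1 then vnorm v
      else vnorm v powr (- 1 / real (d - 1))) else 0)" if "i < d" "l < d" for i l
    using that unfolding a_mat_def by simp
  have "akg = a_mat d v * ?KG"
    unfolding akg_def using kv_carrier by (simp add: mult_assoc_square[of _ d])
  hence "akg $$ (d - 1, j) = vnorm v * ?KG $$ (d - 1, j)"
    using index_diag_mult_mat[OF a_mat_carrier KG last j a] by simp
  also have "\<dots> = (\<Sum>i<d. (vnorm v * kv $$ (d - 1, i)) * real_of_int (gv $$ (i, j)))"
    using index_mult_mat_sum[OF kv_carrier(1) _ last j, of "map_mat real_of_int gv"] j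
    by (simp add: sum_distrib_left mult.assoc)
  also have "\<dots> = real_of_int (\<Sum>i<d. v $ i * gv $$ (i, j))"
    unfolding of_int_sum of_int_mult by (intro sum.cong refl) (use kv_last_row in simp)
  finally show "akg $$ (d - 1, j) = (if j = d - 1 then 1 else 0)" using v_mult_gv[OF j] by simp
qed

lemma akg_ASL_set: "akg \<in> ASL_set d"
proof -
  have "det akg = det (a_mat d v) * det kv * det (map_mat real_of_int gv)"
    unfolding akg_def det_mult[OF mult_carrier_square[OF a_mat_carrier kv_carrier(1)] gvR_carrier]
      det_mult[OF a_mat_carrier kv_carrier(1)] ..
  hence "det akg = 1"
    using det_a_mat[OF two_le_d vnorm_pos[OF primitive]] kv_SO_set det_gv of_int_hom.hom_det[of gv]
    by (simp add: SO_set_def)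
  thus ?thesis unfolding ASL_set_iff[OF one_le_d] using akg_last_row by simp
qed

text \<open>k_v h k_v^-1 lies in K, hence commutes with a_v.\<close>
lemma akg_conj_R:
  assumes h: "h \<in> H_R d v"
  shows "akg * conj_R d gv h = stab_to_K h * akg"
proof -
  let ?G = "map_mat real_of_int gv"
  have G: "?G \<in> carrier_mat d d" "inv_mat d ?G \<in> carrier_mat d d" "?G * inv_mat d ?G = 1\<^sub>m d"
    using inv_mat_of_int[OF gv_carrier det_gv] by auto
  have hc: "h \<in> carrier_mat d d" using h unfolding H_R_def by (auto simp: SO_set_carrier)
  have Kc: "stab_to_K h \<in> carrier_mat d d"
    unfolding stab_to_K_def using mult_carrier_square[OF mult_carrier_square[OF kv_carrier(1) hc] kv_carrier(2)] .
  have "akg * conj_R d gv h = a_mat d v * (kv * h) * ?G"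
    unfolding akg_def conj_R_def using G hc kv_carrier
    by (simp add: mult_assoc_square[of _ d] mult_cancel_square[of _ d])
  also have "\<dots> = (a_mat d v * stab_to_K h) * (kv * ?G)"
    unfolding kv_mult_stab[OF hc] using G Kc kv_carrier by (simp add: mult_assoc_square[of _ d])
  also have "\<dots> = stab_to_K h * akg"
    unfolding akg_def a_mat_comm_K[OF stab_to_K_K_set[OF h]] using G Kc kv_carrier
    by (simp add: mult_assoc_square[of _ d])
  finally show ?thesis .
qed

end

section \<open>The orbit O_{v,p}\<close>

locale orbit_frame_padic = orbit_frame + primitive_frame_padic
begin

definition diagK :: "real mat \<Rightarrow> gelt" where
  "diagK k = ((k, \<lambda>n. 1\<^sub>m d), (k, \<lambda>n. 1\<^sub>m d))"

definition orbit_point :: "(nat \<Rightarrow> rat mat) \<Rightarrow> gelt" where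
  "orbit_point X = ((kv, X), (akg, conj_Qp d gv X))"

text \<open>The image of g in L_v(Z[1/p]), a subgroup of G(Z[1/p]).\<close>
definition Gamma_of :: "rat mat \<Rightarrow> gelt" where
  "Gamma_of g = ((map_mat of_rat g, \<lambda>n. g),
     (map_mat of_rat (gvQ_inv * g * gvQ), \<lambda>n. gvQ_inv * g * gvQ))"

lemma gcarrier_diagK: "k \<in> carrier_mat d d \<Longrightarrow> gcarrier d (diagK k)"
  unfolding gcarrier_def diagK_def by (simp add: mat_seq_const)

lemma gcarrier_orbit_point: "mat_seq d X \<Longrightarrow> gcarrier d (orbit_point X)"
  unfolding gcarrier_def orbit_point_def using kv_carrier by (simp add: conj_Qp_mat_seq)

lemma diagK_mult:
  "k \<in> carrier_mat d d \<Longrightarrow> k' \<in> carrier_mat d d \<Longrightarrow> gmul (diagK k) (diagK k') = diagK (k * k')"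
  unfolding diagK_def by (simp add: seq_mult_one_left mat_seq_const)

lemma diagK_orbit_point_G_set:
  assumes k: "k \<in> K_set d" and X: "X \<in> H_Qp p d v"
  shows "gmul (diagK k) (orbit_point X) \<in> G_set p d"
proof -
  have Xc: "mat_seq d X" using X by (intro SO_Qp_mat_seq H_Qp_SO_Qp)
  have "k * kv \<in> SO_set d" by (rule SO_set_mult[OF K_set_SO_set[OF k] kv_SO_set])
  moreover have "k * akg \<in> ASL_set d"
    by (rule ASL_set_mult[OF one_le_d K_set_ASL_set[OF one_le_d k] akg_ASL_set])
  ultimately show ?thesis
    unfolding diagK_def orbit_point_def G_set_def
    using H_Qp_SO_Qp[OF X] conj_Qp_ASL_Qp[OF X] Xc conj_Qp_mat_seq[OF Xc]
    by (simp add: seq_mult_one_left)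
qed

lemma geq_diagK_orbit_point:
  assumes "mat_seq d X" "mat_seq d Y" "qp_mat_eq p d X Y"
  shows "geq p d (gmul (diagK k) (orbit_point X)) (gmul (diagK k) (orbit_point Y))"
  unfolding diagK_def orbit_point_def
  using assms qp_mat_eq_conj_Qp[OF assms] conj_Qp_mat_seq[OF assms(1)] conj_Qp_mat_seq[OF assms(2)]
  by (simp add: seq_mult_one_left)

lemma base_point_mult_L:
  assumes h: "h \<in> H_R d v" and X: "mat_seq d X"
  shows "gmul ((kv, \<lambda>n. 1\<^sub>m d), (akg, \<lambda>n. 1\<^sub>m d)) ((h, X), (conj_R d gv h, conj_Qp d gv X))
    = gmul (diagK (stab_to_K h)) (orbit_point X)"
  using kv_mult_stab akg_conj_R[OF h] h X conj_Qp_mat_seq[OF X]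
  unfolding diagK_def orbit_point_def H_R_def by (auto simp: seq_mult_one_left SO_set_carrier)

lemma DeltaK_mult_orbit_point:
  assumes "mat_seq d a" "mat_seq d X"
  shows "gmul ((k, a), (k, conj_Qp d gv a)) (orbit_point X) = gmul (diagK k) (orbit_point (seq_mult a X))"
  unfolding diagK_def orbit_point_def using assms
  by (simp add: conj_Qp_seq_mult seq_mult_one_left mat_seq_seq_mult conj_Qp_mat_seq)

lemma map_of_rat_conj:
  assumes "g \<in> carrier_mat d d"
  shows "map_mat of_rat (gvQ_inv * g * gvQ) = conj_R d gv (map_mat of_rat g)"
proof -
  have "map_mat (of_rat :: rat \<Rightarrow> real) gvQ_inv = inv_mat d (map_mat real_of_int gv)"
    using inv_mat_of_int(1)[OF gv_carrier det_gv, where 'a = rat]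
      inv_mat_of_int(1)[OF gv_carrier det_gv, where 'a = real] by (simp add: map_of_rat_of_int)
  thus ?thesis
    unfolding conj_R_def of_rat_hom.mat_hom_mult[OF mult_carrier_square[OF gvQ(2) assms] gvQ(1)]
      of_rat_hom.mat_hom_mult[OF gvQ(2) assms] map_of_rat_of_int by simp
qed

lemma orbit_point_mult_Gamma_of:
  assumes g: "g \<in> H_Zinvp p d v" and X: "mat_seq d X"
  shows "gmul (orbit_point X) (Gamma_of g)
    = gmul (diagK (stab_to_K (map_mat of_rat g))) (orbit_point (seq_mult X (\<lambda>n. g)))"
proof -
  have gs: "g \<in> SO_set d" "g *\<^sub>v map_vec rat_of_int v = map_vec rat_of_int v"
    using g unfolding H_Zinvp_def by auto
  have gc: "g \<in> carrier_mat d d" using gs(1) by (rule SO_set_carrier)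
  have gR: "map_mat of_rat g \<in> H_R d v"
    unfolding H_R_def using SO_set_map_of_rat[OF gs(1)] map_of_rat_fix_iff[OF gc v_carrier] gs(2) by simp
  have gRc: "map_mat (of_rat :: rat \<Rightarrow> real) g \<in> carrier_mat d d" using gc by simp
  show ?thesis
    unfolding diagK_def orbit_point_def Gamma_of_def
    using kv_mult_stab[OF gRc] akg_conj_R[OF gR] map_of_rat_conj[OF gc] X mat_seq_const[OF gc]
      conj_Qp_seq_mult[OF X mat_seq_const[OF gc]] conj_Qp_mat_seq[OF X] conj_Qp_mat_seq[OF mat_seq_const[OF gc]]
    by (simp add: seq_mult_one_left mat_seq_seq_mult conj_Qp_const[symmetric])
qed

lemma Gamma_of_Gamma_set:
  assumes g: "g \<in> H_Zinvp p d v"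
  shows "Gamma_of g \<in> Gamma_set p d"
proof -
  have gs: "g \<in> SO_set d" "Z_inv_p_mat p d g" using g unfolding H_Zinvp_def by auto
  have gc: "g \<in> carrier_mat d d" using gs(1) by (rule SO_set_carrier)
  have "Z_inv_p_mat p d gvQ_inv"
    unfolding inv_mat_of_int(1)[OF gv_carrier det_gv] by (rule Z_inv_p_mat_of_int[OF adj_mat(1)[OF gv_carrier]])
  hence "Z_inv_p_mat p d (gvQ_inv * g * gvQ)"
    using Z_inv_p_mat_of_int[OF gv_carrier] gs(2) gc gvQ by (intro Z_inv_p_mat_mult) auto
  thus ?thesis
    unfolding Gamma_of_def using gs conj_H_Zinvp_ASL_set[OF g] by (intro Gamma_setI)
qed

lemma Gamma_of_inverse:
  assumes "g \<in> H_Zinvp p d v"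
  shows "gmul (Gamma_of g) (Gamma_of (transpose_mat g)) = gone d"
proof -
  have g: "g \<in> SO_set d" using assms unfolding H_Zinvp_def by auto
  have gc: "g \<in> carrier_mat d d" "transpose_mat g \<in> carrier_mat d d" using SO_set_carrier[OF g] by auto
  have 1: "g * transpose_mat g = 1\<^sub>m d" by (rule SO_set_right_inverse[OF g])
  have 2: "gvQ_inv * g * gvQ * (gvQ_inv * transpose_mat g * gvQ) = 1\<^sub>m d"
    using gc gvQ 1 by (simp add: mult_assoc_square[of _ d] mult_cancel_square[of _ d])
  have c: "gvQ_inv * g * gvQ \<in> carrier_mat d d" "gvQ_inv * transpose_mat g * gvQ \<in> carrier_mat d d"
    using gc gvQ by simp_all
  have "map_mat (of_rat :: rat \<Rightarrow> real) g * map_mat of_rat (transpose_mat g) = 1\<^sub>m d"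
    unfolding of_rat_hom.mat_hom_mult[OF gc, symmetric] 1 by (rule of_rat_hom.mat_hom_one)
  moreover have "map_mat (of_rat :: rat \<Rightarrow> real) (gvQ_inv * g * gvQ)
      * map_mat of_rat (gvQ_inv * transpose_mat g * gvQ) = 1\<^sub>m d"
    unfolding of_rat_hom.mat_hom_mult[OF c, symmetric] 2 by (rule of_rat_hom.mat_hom_one)
  ultimately show ?thesis
    unfolding Gamma_of_def gone_def using 1 2 by (simp add: seq_mult_def)
qed

lemma O_v_eq:
  "O_v p d v gv kv = {Ycos p d (gmul (diagK k) (orbit_point X)) | k X. k \<in> K_set d \<and> X \<in> H_Qp p d v}"
proof -
  let ?x0 = "((kv, \<lambda>n. 1\<^sub>m d), (akg, \<lambda>n. 1\<^sub>m d))"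
  have "O_v p d v gv kv = Ycos p d ` {gmul ?x0 l | l. l \<in> Lv_RQp p d v gv}"
    unfolding O_v_def akg_def by blast
  also have "{gmul ?x0 l | l. l \<in> Lv_RQp p d v gv}
      = {gmul (diagK k) (orbit_point X) | k X. k \<in> K_set d \<and> X \<in> H_Qp p d v}"
  proof (intro equalityI subsetI)
    fix z assume "z \<in> {gmul ?x0 l | l. l \<in> Lv_RQp p d v gv}"
    then obtain h X where z: "z = gmul ?x0 ((h, X), (conj_R d gv h, conj_Qp d gv X))"
      and h: "h \<in> H_R d v" and X: "X \<in> H_Qp p d v"
      unfolding Lv_RQp_def by auto
    thus "z \<in> {gmul (diagK k) (orbit_point X) | k X. k \<in> K_set d \<and> X \<in> H_Qp p d v}"
      using base_point_mult_L[OF h SO_Qp_mat_seq[OF H_Qp_SO_Qp[OF X]]] stab_to_K_K_set[OF h] by blast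
  next
    fix z assume "z \<in> {gmul (diagK k) (orbit_point X) | k X. k \<in> K_set d \<and> X \<in> H_Qp p d v}"
    then obtain k X where z: "z = gmul (diagK k) (orbit_point X)" and k: "k \<in> K_set d" and X: "X \<in> H_Qp p d v"
      by blast
    let ?l = "((K_to_stab k, X), (conj_R d gv (K_to_stab k), conj_Qp d gv X))"
    have "?l \<in> Lv_RQp p d v gv"
      unfolding Lv_RQp_def using K_to_stab_H_R[OF k] X by blast
    moreover have "z = gmul ?x0 ?l"
      using base_point_mult_L[OF K_to_stab_H_R[OF k] SO_Qp_mat_seq[OF H_Qp_SO_Qp[OF X]]]
      unfolding z stab_to_K_K_to_stab[OF K_set_carrier[OF k]] by simp
    ultimately show "z \<in> {gmul ?x0 l | l. l \<in> Lv_RQp p d v gv}" by blast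
  qed
  finally show ?thesis by blast
qed

lemma O_vh_eq:
  assumes h: "mat_seq d h"
  shows "O_vh p d v gv kv h
    = {Ycos p d (gmul (diagK k) (orbit_point (seq_mult a h))) | k a. k \<in> K_set d \<and> a \<in> H_Zp p d v}"
proof -
  have eq: "gmul ((k, a), (k, conj_Qp d gv a)) (orbit_point h) = gmul (diagK k) (orbit_point (seq_mult a h))"
    if "a \<in> H_Zp p d v" for k a
    using that h unfolding H_Zp_def by (intro DeltaK_mult_orbit_point) (auto intro: SO_Qp_mat_seq H_Qp_SO_Qp)
  have "O_vh p d v gv kv h = (\<lambda>(k, a). Ycos p d (gmul ((k, a), (k, conj_Qp d gv a)) (orbit_point h)))
      ` (K_set d \<times> H_Zp p d v)"
    unfolding O_vh_def DeltaK_LvZp_def orbit_point_def akg_def by auto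
  also have "\<dots> = (\<lambda>(k, a). Ycos p d (gmul (diagK k) (orbit_point (seq_mult a h)))) ` (K_set d \<times> H_Zp p d v)"
    using eq by (intro image_cong) auto
  finally show ?thesis by auto
qed

lemma O_v_subset_Y_space: "O_v p d v gv kv \<subseteq> Y_space p d"
  unfolding O_v_eq Y_space_def using diagK_orbit_point_G_set by blast

lemma O_vh_subset_O_v:
  assumes h: "h \<in> H_Qp p d v"
  shows "O_vh p d v gv kv h \<subseteq> O_v p d v gv kv"
proof -
  have "seq_mult a h \<in> H_Qp p d v" if "a \<in> H_Zp p d v" for a
    using H_Qp_mult[OF one_le_d v_carrier _ h, of a] that unfolding H_Zp_def seq_mult_def by simp
  thus ?thesis unfolding O_vh_eq[OF SO_Qp_mat_seq[OF H_Qp_SO_Qp[OF h]]] O_v_eq by blast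
qed


lemma double_coset_reps_H_Qp: "double_coset_reps p d v M \<Longrightarrow> h \<in> M \<Longrightarrow> h \<in> H_Qp p d v"
  unfolding double_coset_reps_def by auto

text \<open>Right multiplication by the image of g in G(Z[1/p]) moves the factor g of X = a h g into
  the lattice; its real component is absorbed into K.\<close>
lemma Ycos_orbit_point_reduce:
  assumes k: "k \<in> K_set d" and X: "mat_seq d X" and a: "mat_seq d a" and h: "mat_seq d h"
    and g: "g \<in> H_Zinvp p d v" and Xahg: "qp_mat_eq p d X (\<lambda>n. a n * h n * g)"
  obtains k' where "k' \<in> K_set d"
    "Ycos p d (gmul (diagK k) (orbit_point X)) = Ycos p d (gmul (diagK k') (orbit_point (seq_mult a h)))"
proof -
  have gs: "g \<in> SO_set d" "g *\<^sub>v map_vec rat_of_int v = map_vec rat_of_int v"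
    using g unfolding H_Zinvp_def by auto
  have gc: "g \<in> carrier_mat d d" using gs(1) by (rule SO_set_carrier)
  define kg where "kg = stab_to_K (map_mat of_rat g)"
  have kg: "kg \<in> K_set d"
    unfolding kg_def using SO_set_map_of_rat[OF gs(1)] map_of_rat_fix_iff[OF gc v_carrier] gs(2)
    by (intro stab_to_K_K_set) (simp add: H_R_def)
  define k' where "k' = k * transpose_mat kg"
  have k': "k' \<in> K_set d" unfolding k'_def by (intro K_set_mult K_set_transpose k kg)
  have kk': "k' * kg = k"
    unfolding k'_def using K_set_carrier[OF k] K_set_carrier[OF kg] SO_set_orthogonal[OF K_set_SO_set[OF kg]]
    by (simp add: mult_assoc_square[of _ d])
  let ?ah = "seq_mult a h" and ?B = "gmul (diagK k') (orbit_point (seq_mult a h))"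
  have ahc: "mat_seq d ?ah" using a h by (rule mat_seq_seq_mult)
  have "gmul ?B (Gamma_of g) = gmul (diagK k') (gmul (diagK kg) (orbit_point (seq_mult ?ah (\<lambda>n. g))))"
    using gmul_assoc[OF gcarrier_diagK[OF K_set_carrier[OF k']] gcarrier_orbit_point[OF ahc]
        Gamma_set_gcarrier[OF Gamma_of_Gamma_set[OF g]]]
    unfolding orbit_point_mult_Gamma_of[OF g ahc] kg_def by simp
  also have "\<dots> = gmul (diagK k) (orbit_point (seq_mult ?ah (\<lambda>n. g)))"
    using gmul_assoc[OF gcarrier_diagK[OF K_set_carrier[OF k']] gcarrier_diagK[OF K_set_carrier[OF kg]]
        gcarrier_orbit_point[OF mat_seq_seq_mult[OF ahc mat_seq_const[OF gc]]]]
    unfolding diagK_mult[OF K_set_carrier[OF k'] K_set_carrier[OF kg]] kk' by simp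
  finally have "gmul ?B (Gamma_of g) = gmul (diagK k) (orbit_point (seq_mult ?ah (\<lambda>n. g)))" .
  moreover have "seq_mult ?ah (\<lambda>n. g) = (\<lambda>n. a n * h n * g)" by (simp add: seq_mult_def)
  ultimately have B\<gamma>: "gmul ?B (Gamma_of g) = gmul (diagK k) (orbit_point (\<lambda>n. a n * h n * g))" by simp
  have e: "geq p d (gmul (diagK k) (orbit_point X)) (gmul ?B (Gamma_of g))"
    unfolding B\<gamma> using X mat_seq_mult[OF mat_seq_mult[OF a h] mat_seq_const[OF gc]] Xahg
    by (rule geq_diagK_orbit_point)
  have "Ycos p d (gmul (diagK k) (orbit_point X)) = Ycos p d ?B"
    by (rule Ycos_eq[OF one_le_d
          gmul_gcarrier[OF gcarrier_diagK[OF K_set_carrier[OF k]] gcarrier_orbit_point[OF X]]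
          gmul_gcarrier[OF gcarrier_diagK[OF K_set_carrier[OF k']] gcarrier_orbit_point[OF ahc]]
          Gamma_of_Gamma_set[OF g] Gamma_of_Gamma_set[OF H_Zinvp_transpose[OF g]] Gamma_of_inverse[OF g] e])
  thus ?thesis using k' that by blast
qed

lemma O_v_subset_Union:
  assumes M: "double_coset_reps p d v M"
  shows "O_v p d v gv kv \<subseteq> (\<Union>h\<in>M. O_vh p d v gv kv h)"
proof
  fix z assume "z \<in> O_v p d v gv kv"
  then obtain k X where z: "z = Ycos p d (gmul (diagK k) (orbit_point X))"
    and k: "k \<in> K_set d" and X: "X \<in> H_Qp p d v"
    unfolding O_v_eq by blast
  obtain h a g where h: "h \<in> M" and a: "a \<in> H_Zp p d v" and g: "g \<in> H_Zinvp p d v"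
    and Xahg: "qp_mat_eq p d X (\<lambda>n. a n * h n * g)"
    using M X unfolding double_coset_reps_def by blast
  have seq: "mat_seq d X" "mat_seq d a" "mat_seq d h"
    using X a double_coset_reps_H_Qp[OF M h] unfolding H_Zp_def by (auto intro: SO_Qp_mat_seq H_Qp_SO_Qp)
  obtain k' where k': "k' \<in> K_set d"
    and "z = Ycos p d (gmul (diagK k') (orbit_point (seq_mult a h)))"
    using Ycos_orbit_point_reduce[OF k seq g Xahg] unfolding z by blast
  moreover have "Ycos p d (gmul (diagK k') (orbit_point (seq_mult a h))) \<in> O_vh p d v gv kv h"
    unfolding O_vh_eq[OF seq(3)] using k' a by blast
  ultimately show "z \<in> (\<Union>h\<in>M. O_vh p d v gv kv h)" using h by blast
qed

lemma geq_orbit_point_Gamma: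
  assumes k: "k1 \<in> K_set d" "k2 \<in> K_set d" and X: "mat_seq d X1" "mat_seq d X2"
    and \<gamma>: "\<gamma> \<in> Gamma_set p d"
    and e: "geq p d (gmul (diagK k1) (orbit_point X1)) (gmul (gmul (diagK k2) (orbit_point X2)) \<gamma>)"
  obtains g where "g \<in> H_Zinvp p d v" "qp_mat_eq p d X1 (\<lambda>n. X2 n * g)"
proof -
  obtain g1 g2 where \<gamma>g: "\<gamma> = ((map_mat of_rat g1, \<lambda>n. g1), (map_mat of_rat g2, \<lambda>n. g2))"
    and g1: "g1 \<in> SO_set d" "Z_inv_p_mat p d g1"
    using \<gamma> unfolding Gamma_set_def by auto
  have e1: "k1 * kv = k2 * kv * map_mat of_rat g1"
    and e2: "qp_mat_eq p d X1 (\<lambda>n. X2 n * g1)"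
    using e X unfolding diagK_def orbit_point_def \<gamma>g by (simp_all add: seq_mult_one_left) (simp add: seq_mult_def)
  have g1c: "g1 \<in> carrier_mat d d" using g1(1) by (rule SO_set_carrier)
  have "map_mat of_rat g1 = K_to_stab (transpose_mat k2 * k1)"
    unfolding K_to_stab_def using e1 K_set_carrier[OF k(1)] K_set_carrier[OF k(2)] kv_carrier g1c
      SO_set_orthogonal[OF K_set_SO_set[OF k(2)]] SO_set_orthogonal[OF kv_SO_set]
    by (simp add: mult_assoc_square[of _ d] mult_cancel_square[of _ d])
  hence "map_mat of_rat g1 \<in> H_R d v" using K_to_stab_H_R[OF K_set_mult[OF K_set_transpose[OF k(2)] k(1)]] by simp
  hence "g1 *\<^sub>v map_vec rat_of_int v = map_vec rat_of_int v"
    unfolding H_R_def using map_of_rat_fix_iff[OF g1c v_carrier] by simp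
  hence "g1 \<in> H_Zinvp p d v" unfolding H_Zinvp_def using g1 by simp
  thus ?thesis using e2 that by blast
qed

lemma O_vh_disjoint:
  assumes M: "double_coset_reps p d v M" and h1: "h1 \<in> M" and h2: "h2 \<in> M"
    and meet: "O_vh p d v gv kv h1 \<inter> O_vh p d v gv kv h2 \<noteq> {}"
  shows "h1 = h2"
proof -
  have hQ: "h1 \<in> H_Qp p d v" "h2 \<in> H_Qp p d v" using double_coset_reps_H_Qp[OF M] h1 h2 by auto
  have hc: "mat_seq d h1" "mat_seq d h2" using hQ by (auto intro: SO_Qp_mat_seq H_Qp_SO_Qp)
  obtain k1 a1 k2 a2 where k: "k1 \<in> K_set d" "k2 \<in> K_set d" and a: "a1 \<in> H_Zp p d v" "a2 \<in> H_Zp p d v"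
    and eq: "Ycos p d (gmul (diagK k1) (orbit_point (seq_mult a1 h1)))
      = Ycos p d (gmul (diagK k2) (orbit_point (seq_mult a2 h2)))"
    using meet unfolding O_vh_eq[OF hc(1)] O_vh_eq[OF hc(2)] by blast
  have aQ: "a1 \<in> H_Qp p d v" "a2 \<in> H_Qp p d v" using a unfolding H_Zp_def by auto
  have ac: "mat_seq d a1" "mat_seq d a2" using aQ by (auto intro: SO_Qp_mat_seq H_Qp_SO_Qp)
  have "seq_mult a1 h1 \<in> H_Qp p d v"
    using H_Qp_mult[OF one_le_d v_carrier aQ(1) hQ(1)] by (simp add: seq_mult_def)
  hence "gmul (diagK k1) (orbit_point (seq_mult a1 h1)) \<in> G_set p d"
    by (rule diagK_orbit_point_G_set[OF k(1)])
  from Ycos_self[OF one_le_d this] obtain \<gamma> where \<gamma>: "\<gamma> \<in> Gamma_set p d"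
    and e: "geq p d (gmul (diagK k1) (orbit_point (seq_mult a1 h1)))
      (gmul (gmul (diagK k2) (orbit_point (seq_mult a2 h2))) \<gamma>)"
    unfolding eq by (rule YcosE)
  obtain g where g: "g \<in> H_Zinvp p d v" and e2: "qp_mat_eq p d (seq_mult a1 h1) (\<lambda>n. seq_mult a2 h2 n * g)"
    using geq_orbit_point_Gamma[OF k mat_seq_seq_mult[OF ac(1) hc(1)] mat_seq_seq_mult[OF ac(2) hc(2)] \<gamma> e] .
  have "(\<lambda>n. a1 n * h1 n * 1\<^sub>m d) = (\<lambda>n. a1 n * h1 n)"
    using mat_seqD[OF ac(1)] mat_seqD[OF hc(1)] by (intro ext right_mult_one_mat[of _ d d]) simp
  hence "qp_mat_eq p d (\<lambda>n. a1 n * h1 n * 1\<^sub>m d) (\<lambda>n. a2 n * h2 n * g)"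
    using e2 by (simp add: seq_mult_def)
  thus ?thesis
    using M h1 h2 a g H_Zinvp_one[OF v_carrier] unfolding double_coset_reps_def by blast
qed

end

theorem lemma3p4:
  fixes p d :: nat and v :: "int vec" and gv :: "int mat" and kv :: "real mat"
    and M :: "(nat \<Rightarrow> rat mat) set"
  assumes "2 \<le> d"
    and "primitive_vec d v"
    and "prime p" and "odd p"
    and "valid_gv d v gv"
    and "valid_kv d v kv"
    and "double_coset_reps p d v M"
  shows "O_v p d v gv kv \<subseteq> Y_space p d
    \<and> O_v p d v gv kv = (\<Union>h\<in>M. O_vh p d v gv kv h)
    \<and> (\<forall>h1\<in>M. \<forall>h2\<in>M. h1 \<noteq> h2 \<longrightarrow> O_vh p d v gv kv h1 \<inter> O_vh p d v gv kv h2 = {})"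
proof -
  interpret orbit_frame_padic d v gv kv p
    using assms by unfold_locales
  show ?thesis
    using O_v_subset_Y_space O_v_subset_Union[OF assms(7)] O_vh_subset_O_v
      double_coset_reps_H_Qp[OF assms(7)] O_vh_disjoint[OF assms(7)] by blast
qed

end
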